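(* Let $G_0^*$ be a $(k,r_0)$-regular hypergraph on $n$ vertices and $G_1^*$ a $(k,r_1)$-regular hypergraph on $m$ vertices. List the eigenvalues of $S(G_0^* )$ with multiplicity as $n-1-2r_0(k-1),\mu_2^{(0)},\dots,\mu_n^{(0)}$, where $\mu_2^{(0)},\dots,\mu_n^{(0)}$ are the eigenvalues of $S(G_0^* )$ on the orthogonal complement of the all-ones vector; similarly list the eigenvalues of $S(G_1^* )$ as $m-1-2r_1(k-1),\mu_2^{(1)},\dots,\mu_m^{(1)}$. Let $\mathcal{S}$ be the Seidel corona matrix of $G_0^*$ and $G_1^*$, and $b=\binom{m-1}{k-2}$. Then the spectrum of $\mathcal{S}$ (as a multiset) consists of: the $2(n-1)$ numbers $$\frac{\mu_i^{(0)}-1-2r_1(k-1)\pm\sqrt{\big(\mu_i^{(0)}+1+2r_1(k-1)\big)^2+16mb^2}}{2},\qquad i=2,\dots,n;$$ each $\mu_j^{(1)}$, $j=2,\dots,m$, with multiplicity $n$; and the two roots $\alpha_1,\alpha_2$ of $$\mu^2+\big(2-n(m+1)+2(r_0+r_1)(k-1)\big)\mu+\big(n-1-2r_0(k-1)\big)\big(mn-1-2r_1(k-1)\big)-m(n-2b)^2=0.$$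
   Context: All hypergraphs are finite and simple: a hypergraph $G^*=(V,E)$ consists of a finite vertex set $V$ and a set $E$ of subsets of $V$ (hyperedges), each of size at least $2$. It is $k$-uniform if every hyperedge has exactly $k$ elements, and $(k,r)$-regular if it is $k$-uniform and every vertex lies in exactly $r$ hyperedges. For a hypergraph with vertices $v_1,\dots,v_n$, the adjacency matrix $A(G^* )$ is the $n\times n$ matrix whose $(i,j)$ entry, for $i\ne j$, is the number of hyperedges containing both $v_i$ and $v_j$, and whose diagonal entries are $0$; the Seidel matrix is $S(G^* )=J_n-I_n-2A(G^* )$. $J_n$ (resp. $J_{a,b}$) is the all-ones $n\times n$ (resp. $a\times b$) matrix, $I_n$ the identity, $\otimes$ the Kronecker product. Binomial coefficients $\binom{x}{y}$ with integers $x\ge 0$ and $y$ are $0$ when $y<0$ or $y>x$. Seidel corona matrix: for $k$-uniform hypergraphs $G_0^*$ on $n$ vertices and $G_1^*$ on $m$ vertices, with $b=\binom{m-1}{k-2}$, $$\mathcal{S}=\begin{bmatrix}S(G_0^* ) & J_{1,m}\otimes(J_n-2bI_n)\\ J_{m,1}\otimes(J_n-2bI_n) & J_m\otimes(J_n-I_n)+S(G_1^* )\otimes I_n\end{bmatrix},$$ which equals $J_{n(m+1)}-I_{n(m+1)}-2\mathcal{A}$ for $\mathcal{A}=\begin{bmatrix}A(G_0^* ) & b(J_{1,m}\otimes I_n)\\ b(J_{m,1}\otimes I_n) & A(G_1^* )\otimes I_n\end{bmatrix}$. *)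

theory Defs
  imports "Jordan_Normal_Form.Char_Poly"
begin

definition hypergraph :: "nat \<Rightarrow> nat set set \<Rightarrow> bool" where
  "hypergraph n E \<longleftrightarrow> (\<forall>e\<in>E. e \<subseteq> {0..<n} \<and> 2 \<le> card e)"

definition uniform_hg :: "nat \<Rightarrow> nat \<Rightarrow> nat set set \<Rightarrow> bool" where
  "uniform_hg k n E \<longleftrightarrow> hypergraph n E \<and> (\<forall>e\<in>E. card e = k)"

definition regular_hg :: "nat \<Rightarrow> nat \<Rightarrow> nat \<Rightarrow> nat set set \<Rightarrow> bool" where
  "regular_hg k r n E \<longleftrightarrow> uniform_hg k n E \<and> (\<forall>v<n. card {e\<in>E. v \<in> e} = r)"

definition all_ones :: "nat \<Rightarrow> nat \<Rightarrow> real mat" where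
  "all_ones a b = mat a b (\<lambda>_. 1)"

definition adj_mat :: "nat \<Rightarrow> nat set set \<Rightarrow> real mat" where
  "adj_mat n E = mat n n (\<lambda>(i,j). if i = j then 0 else real (card {e\<in>E. i \<in> e \<and> j \<in> e}))"

definition seidel_mat :: "nat \<Rightarrow> nat set set \<Rightarrow> real mat" where
  "seidel_mat n E = all_ones n n - 1\<^sub>m n - 2 \<cdot>\<^sub>m adj_mat n E"

definition kron :: "real mat \<Rightarrow> real mat \<Rightarrow> real mat" where
  "kron A B = mat (dim_row A * dim_row B) (dim_col A * dim_col B)
     (\<lambda>(i,j). A $$ (i div dim_row B, j div dim_col B) * B $$ (i mod dim_row B, j mod dim_col B))"

text \<open>b = binom(m-1, k-2), with the convention that it is 0 when k-2 < 0.\<close>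
definition corona_b :: "nat \<Rightarrow> nat \<Rightarrow> real" where
  "corona_b k m = (if k < 2 then 0 else real ((m - 1) choose (k - 2)))"

definition seidel_corona :: "nat \<Rightarrow> nat \<Rightarrow> nat \<Rightarrow> nat set set \<Rightarrow> nat set set \<Rightarrow> real mat" where
  "seidel_corona k n m E0 E1 =
     (let b = corona_b k m;
          C = all_ones n n - (2 * b) \<cdot>\<^sub>m 1\<^sub>m n
      in four_block_mat (seidel_mat n E0) (kron (all_ones 1 m) C)
                        (kron (all_ones m 1) C)
                        (kron (all_ones m m) (all_ones n n - 1\<^sub>m n) + kron (seidel_mat m E1) (1\<^sub>m n)))"

text \<open>Spectrum with (algebraic) multiplicities: the multiset of roots of the
  characteristic polynomial, when it splits over the reals (as it does for symmetric matrices).\<close>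
definition spectrum_mset :: "real mat \<Rightarrow> real multiset" where
  "spectrum_mset A = (THE M. char_poly A = (\<Prod>a\<in>#M. [:- a, 1:]))"

end

theory Submission
  imports Defs "Jordan_Normal_Form.Schur_Decomposition"
begin

text \<open>
  Both Seidel matrices are real symmetric with constant row sums \<open>l\<^sub>0\<close>, \<open>l\<^sub>1\<close>, so they admit
  Schur decompositions \<open>S\<^sub>i = P\<^sub>i T\<^sub>i P\<^sub>i\<^sup>-\<^sup>1\<close> with \<open>T\<^sub>i\<close> upper triangular, \<open>T\<^sub>i(0,0) = l\<^sub>i\<close> and
  the all-ones vector as first column of \<open>P\<^sub>i\<close>. Conjugating the corona matrix by
  \<open>diag(P\<^sub>0, P\<^sub>1 \<otimes> P\<^sub>0)\<close> turns every block \<open>J - cI\<close> into "first row minus \<open>cI\<close>"; indexing the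
  result by (level, position) in \<open>{0..m} \<times> {0..<n}\<close> and ordering position-major, it becomes upper
  triangular except for the entries coupling levels 0 and 1 at equal positions. A shear with a
  root of a quadratic removes each coupling, so the characteristic polynomial is the product of
  one quadratic per position \<open>t\<close> and of \<open>(x - T\<^sub>1(j,j))\<^sup>n\<close> for \<open>j \<ge> 1\<close>; the quadratic for \<open>t = 0\<close>
  gives \<open>\<alpha>\<^sub>1, \<alpha>\<^sub>2\<close>, the others give the pairs attached to \<open>\<mu>\<^sub>t\<^sup>(\<^sup>0\<^sup>)\<close>.
\<close>

section \<open>Kronecker products\<close>

lemma (in comm_monoid_set) lessThan_mult_nat:
  fixes g :: "nat \<Rightarrow> 'a"
  shows "F g {..<n * k} = F (\<lambda>i. F (\<lambda>j. g (i * k + j)) {..<k}) {..<n}"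
proof -
  have "F g {i * k..<i * k + k} = F (\<lambda>j. g (i * k + j)) {..<k}" for i
    using shift_bounds_nat_ivl[of g 0 "i * k" k] by (simp add: atLeast0LessThan add.commute)
  then show ?thesis
    using nat_group[of g k n] by simp
qed

lemma kron_dim[simp]:
  "dim_row (kron A B) = dim_row A * dim_row B" "dim_col (kron A B) = dim_col A * dim_col B"
  by (auto simp: kron_def)

lemma kron_index[simp]:
  "i < dim_row A * dim_row B \<Longrightarrow> j < dim_col A * dim_col B \<Longrightarrow>
   kron A B $$ (i,j) = A $$ (i div dim_row B, j div dim_col B) * B $$ (i mod dim_row B, j mod dim_col B)"
  by (auto simp: kron_def)

lemma kron_carrier_mat[simp,intro]:
  "A \<in> carrier_mat a b \<Longrightarrow> B \<in> carrier_mat p q \<Longrightarrow> kron A B \<in> carrier_mat (a * p) (b * q)"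
  unfolding carrier_mat_def by simp

lemma kron_mult:
  assumes A: "A \<in> carrier_mat a b" and B: "B \<in> carrier_mat p q"
    and C: "C \<in> carrier_mat b c" and D: "D \<in> carrier_mat q r"
  shows "kron A B * kron C D = kron (A * C) (B * D)"
proof (rule eq_matI)
  fix i j assume "i < dim_row (kron (A * C) (B * D))" "j < dim_col (kron (A * C) (B * D))"
  then have i: "i < a * p" and j: "j < c * r"
    using A B C D by auto
  then have "0 < p" "0 < r"
    by (auto intro: gr0I)
  have "(kron A B * kron C D) $$ (i,j) = (\<Sum>k<b * q. kron A B $$ (i,k) * kron C D $$ (k,j))"
    using A B C D i j by (simp add: scalar_prod_def lessThan_atLeast0 row_def col_def)
  also have "\<dots> = (\<Sum>u<b. \<Sum>v<q. (A $$ (i div p, u) * C $$ (u, j div r)) * (B $$ (i mod p, v) * D $$ (v, j mod r)))"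
    unfolding sum.lessThan_mult_nat
  proof (intro sum.cong refl)
    fix u v assume u: "u \<in> {..<b}" and v: "v \<in> {..<q}"
    have "u * q + v < Suc u * q"
      using v by simp
    also have "\<dots> \<le> b * q"
      using u by (intro mult_le_mono1) simp
    finally have "u * q + v < b * q" .
    then show "kron A B $$ (i, u * q + v) * kron C D $$ (u * q + v, j) =
         A $$ (i div p, u) * C $$ (u, j div r) * (B $$ (i mod p, v) * D $$ (v, j mod r))"
      using A B C D i j v by (simp add: algebra_simps)
  qed
  also have "\<dots> = (\<Sum>u<b. A $$ (i div p, u) * C $$ (u, j div r)) * (\<Sum>v<q. B $$ (i mod p, v) * D $$ (v, j mod r))"
    by (simp add: sum_product)
  also have "\<dots> = (A * C) $$ (i div p, j div r) * (B * D) $$ (i mod p, j mod r)"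
    using A B C D i j \<open>0 < p\<close> \<open>0 < r\<close>
    by (simp add: scalar_prod_def lessThan_atLeast0 less_mult_imp_div_less mult.commute[of c])
  finally show "(kron A B * kron C D) $$ (i,j) = kron (A * C) (B * D) $$ (i,j)"
    using A B C D i j by simp
qed (use A B C D in auto)

lemma kron_one_one: "kron (1\<^sub>m a) (1\<^sub>m c) = 1\<^sub>m (a * c)"
proof (rule eq_matI)
  fix i j assume "i < dim_row (1\<^sub>m (a * c) :: real mat)" "j < dim_col (1\<^sub>m (a * c) :: real mat)"
  then have i: "i < a * c" and j: "j < a * c"
    by auto
  then have "0 < c"
    by (auto intro: gr0I)
  have "(i div c = j div c \<and> i mod c = j mod c) = (i = j)"
    by (metis div_mult_mod_eq)
  then show "kron (1\<^sub>m a) (1\<^sub>m c) $$ (i,j) = 1\<^sub>m (a * c) $$ (i,j)"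
    using i j \<open>0 < c\<close> by (auto simp: less_mult_imp_div_less)
qed auto

lemma kron_one_left: "kron (1\<^sub>m 1) X = X"
  by (rule eq_matI) (auto simp: kron_def)

section \<open>Characteristic polynomials and spectra\<close>

lemma prod_mset_linear_factors_inj:
  fixes M M' :: "'a::idom multiset"
  assumes "(\<Prod>a\<in>#M. [:-a,1:]) = (\<Prod>a\<in>#M'. [:-a,1:])"
  shows "M = M'"
  using assms
proof (induction M arbitrary: M')
  case empty
  have "degree (\<Prod>a\<in>#M'. [:-a,1:]) = size M'"
  proof (induction M')
    case (add x M')
    have "(\<Prod>a\<in>#M'. [:-a,1:]) \<noteq> 0"
      by (auto simp: prod_mset_zero_iff)
    with add show ?case
      by (simp add: degree_mult_eq del: mult_pCons_left)
  qed simp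
  with empty show ?case
    by simp
next
  case (add x M)
  have "poly (\<Prod>a\<in>#M'. [:-a,1:]) x = 0"
    using add.prems[symmetric] by (simp add: poly_prod_mset)
  then have "x \<in># M'"
    by (auto simp: poly_prod_mset prod_mset_zero_iff)
  then obtain M'' where M': "M' = add_mset x M''"
    by (metis multi_member_split)
  from add.prems have "[:-x,1:] * (\<Prod>a\<in>#M. [:-a,1:]) = [:-x,1:] * (\<Prod>a\<in>#M''. [:-a,1:])"
    unfolding M' by simp
  then have "(\<Prod>a\<in>#M. [:-a,1:]) = (\<Prod>a\<in>#M''. [:-a,1:])"
    by (simp del: mult_pCons_left)
  from add.IH[OF this] show ?case
    unfolding M' by simp
qed

lemma spectrum_mset_eqI: "char_poly A = (\<Prod>a\<in>#M. [:-a,1:]) \<Longrightarrow> spectrum_mset A = M"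
  unfolding spectrum_mset_def by (rule the_equality) (auto intro: prod_mset_linear_factors_inj)

lemma if_one_zero_mult: "(if P then 1 else 0) * x = (if P then x else (0::'a::semiring_1))"
  by simp

lemma mult_if_one_zero: "x * (if P then 1 else 0) = (if P then x else (0::'a::semiring_1))"
  by simp

lemma char_poly_triangular_after_reordering:
  fixes A :: "'a::field mat"
  assumes A: "A \<in> carrier_mat N N" and f: "bij_betw f {..<N} {..<N}"
    and below: "\<And>a b. a < N \<Longrightarrow> b < N \<Longrightarrow> f b < f a \<Longrightarrow> A $$ (a,b) = 0"
  shows "char_poly A = (\<Prod>a<N. [:-A $$ (a,a),1:])"
proof -
  define g where "g = inv_into {..<N} f"
  have g: "bij_betw g {..<N} {..<N}"
    unfolding g_def by (rule bij_betw_inv_into[OF f])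
  have gf: "\<And>a. a < N \<Longrightarrow> g (f a) = a" and fg: "\<And>a. a < N \<Longrightarrow> f (g a) = a"
    unfolding g_def using f by (auto simp: bij_betw_inv_into_left bij_betw_inv_into_right)
  have fN: "\<And>a. a < N \<Longrightarrow> f a < N" and gN: "\<And>a. a < N \<Longrightarrow> g a < N"
    using f g by (auto simp: bij_betw_def)
  define B where "B = mat N N (\<lambda>(i,j). A $$ (g i, g j))"
  define P :: "'a mat" where "P = mat N N (\<lambda>(i,j). if f i = j then 1 else 0)"
  define Q :: "'a mat" where "Q = mat N N (\<lambda>(i,j). if f j = i then 1 else 0)"
  have B: "B \<in> carrier_mat N N" and P: "P \<in> carrier_mat N N" and Q: "Q \<in> carrier_mat N N"
    unfolding B_def P_def Q_def by auto
  have PB: "P * B = mat N N (\<lambda>(i,j). B $$ (f i, j))"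
    using B fN by (intro eq_matI) (auto simp: P_def scalar_prod_def lessThan_atLeast0 if_one_zero_mult mult_if_one_zero)
  have PBQ: "(P * B * Q) $$ (i,j) = B $$ (f i, f j)" if "i < N" "j < N" for i j
    using that B fN by (simp add: PB Q_def scalar_prod_def lessThan_atLeast0 mult_if_one_zero)
  have "A = P * B * Q"
  proof (rule eq_matI)
    fix i j assume "i < dim_row (P * B * Q)" "j < dim_col (P * B * Q)"
    then have "i < N" "j < N"
      using P Q by auto
    then show "A $$ (i,j) = (P * B * Q) $$ (i,j)"
      by (simp only: PBQ) (simp add: B_def fN gf)
  qed (use A P Q in auto)
  moreover have "P * Q = 1\<^sub>m N"
    using fN gf by (intro eq_matI) (auto dest: arg_cong[of _ _ g] simp: P_def Q_def scalar_prod_def lessThan_atLeast0 if_one_zero_mult mult_if_one_zero)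
  moreover have "Q * P = 1\<^sub>m N"
    using P Q by (intro mat_mult_left_right_inverse[OF P Q \<open>P * Q = 1\<^sub>m N\<close>])
  ultimately have "similar_mat A B"
    unfolding similar_mat_def using A B P Q by (blast intro: similar_mat_witI)
  moreover have "upper_triangular B"
    unfolding upper_triangular_def B_def using gN fg below by auto
  ultimately have "char_poly A = (\<Prod>a\<leftarrow>diag_mat B. [:-a,1:])"
    using char_poly_similar char_poly_upper_triangular[OF B] by metis
  also have "\<dots> = (\<Prod>i<N. [:-A $$ (g i, g i),1:])"
    using B unfolding diag_mat_def B_def
    by (simp add: prod.distinct_set_conv_list[symmetric] lessThan_atLeast0 map_map o_def atLeast_upt)
  also have "\<dots> = (\<Prod>a<N. [:-A $$ (a,a),1:])"
    using prod.reindex_bij_betw[OF g, of "\<lambda>a. [:-A $$ (a,a),1:]"] by simp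
  finally show ?thesis .
qed

lemma spectrum_mset_similar_upper_triangular:
  assumes A: "A \<in> carrier_mat n n" and sim: "similar_mat_wit A T P Q" and T: "upper_triangular T"
  shows "spectrum_mset A = image_mset (\<lambda>i. T $$ (i,i)) (mset_set {..<n})"
proof (rule spectrum_mset_eqI)
  have Tc: "T \<in> carrier_mat n n"
    using similar_mat_witD2[OF A sim] by auto
  have "char_poly A = char_poly T"
    using sim char_poly_similar unfolding similar_mat_def by blast
  also have "\<dots> = (\<Prod>a\<leftarrow>diag_mat T. [:-a,1:])"
    by (rule char_poly_upper_triangular[OF Tc T])
  finally show "char_poly A = (\<Prod>a\<in># image_mset (\<lambda>i. T $$ (i,i)) (mset_set {..<n}). [:-a,1:])"
    using Tc by (simp add: diag_mat_def prod_mset_prod_list[symmetric] mset_map image_mset.compositionality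
        lessThan_atLeast0 flip: mset_upt)
qed

section \<open>Real symmetric matrices with constant row sums\<close>

lemma symmetric_real_mat_eigenvalue_real:
  fixes A :: "real mat"
  assumes A: "A \<in> carrier_mat n n" and sym: "transpose_mat A = A"
    and ev: "eigenvector (map_mat of_real A) v a"
  shows "Im a = 0"
proof -
  have Aij: "A $$ (i,j) = A $$ (j,i)" if "i < n" "j < n" for i j
    using that A by (metis carrier_matD index_transpose_mat(1) sym)
  from ev have v: "v \<in> carrier_vec n" and v0: "v \<noteq> 0\<^sub>v n"
    and eq: "map_mat of_real A *\<^sub>v v = a \<cdot>\<^sub>v v"
    using A unfolding eigenvector_def by auto
  have row: "(\<Sum>j<n. of_real (A $$ (i,j)) * v $ j) = a * v $ i" if "i < n" for i
  proof -
    have "(map_mat of_real A *\<^sub>v v) $ i = (a \<cdot>\<^sub>v v) $ i"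
      using eq by simp
    then show ?thesis
      using that A v by (simp add: scalar_prod_def lessThan_atLeast0)
  qed
  define T where "T = (\<Sum>i<n. \<Sum>j<n. cnj (v $ i) * of_real (A $$ (i,j)) * v $ j)"
  define W where "W = (\<Sum>i<n. (cmod (v $ i))\<^sup>2)"
  have "T = (\<Sum>i<n. cnj (v $ i) * (\<Sum>j<n. of_real (A $$ (i,j)) * v $ j))"
    unfolding T_def by (simp add: sum_distrib_left mult.assoc)
  also have "\<dots> = (\<Sum>i<n. cnj (v $ i) * (a * v $ i))"
    by (simp add: row)
  also have "\<dots> = a * of_real W"
    unfolding W_def of_real_sum sum_distrib_left
    by (intro sum.cong refl) (subst complex_norm_square, simp add: mult_ac)
  finally have TW: "T = a * of_real W" .
  \<comment> \<open>the Hermitian form of a real symmetric matrix is real\<close>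
  have "cnj T = (\<Sum>i<n. \<Sum>j<n. v $ i * of_real (A $$ (i,j)) * cnj (v $ j))"
    unfolding T_def by (simp add: cnj_sum)
  also have "\<dots> = (\<Sum>j<n. \<Sum>i<n. v $ i * of_real (A $$ (i,j)) * cnj (v $ j))"
    by (rule sum.swap)
  also have "\<dots> = T"
    unfolding T_def by (intro sum.cong refl) (simp add: Aij mult.commute mult.left_commute)
  finally have "Im (cnj T) = Im T"
    by simp
  then have "Im T = 0"
    by simp
  obtain i0 where i0: "i0 < n" "v $ i0 \<noteq> 0"
    using v v0 by (metis eq_vecI carrier_vecD index_zero_vec)
  have "0 < (cmod (v $ i0))\<^sup>2"
    using i0 by simp
  also have "\<dots> \<le> W"
    unfolding W_def using i0 by (intro member_le_sum) auto
  finally show "Im a = 0"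
    using \<open>Im T = 0\<close> unfolding TW by simp
qed

lemma char_poly_symmetric_real_mat_splits:
  fixes A :: "real mat"
  assumes A: "A \<in> carrier_mat n n" and sym: "transpose_mat A = A"
  shows "\<exists>es. char_poly A = (\<Prod>e\<leftarrow>es. [:-e,1:])"
proof -
  let ?Ac = "map_mat complex_of_real A"
  have Ac: "?Ac \<in> carrier_mat n n"
    using A by simp
  obtain as where as: "char_poly ?Ac = (\<Prod>a\<leftarrow>as. [:-a,1:])"
    using char_poly_factorized[OF Ac] by auto
  have real: "of_real (Re a) = a" if "a \<in> set as" for a
  proof -
    have "poly (char_poly ?Ac) a = 0"
      unfolding as using that by (rule linear_poly_root)
    then obtain v where "eigenvector ?Ac v a"
      using eigenvalue_root_char_poly[OF Ac] unfolding eigenvalue_def by auto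
    from symmetric_real_mat_eigenvalue_real[OF A sym this] show ?thesis
      by (simp add: complex_eq_iff)
  qed
  interpret of_real_poly: map_poly_comm_ring_hom "of_real :: real \<Rightarrow> complex" ..
  have "map_poly of_real (\<Prod>e\<leftarrow>map Re as. [:-e,1:]) = (\<Prod>a\<leftarrow>as. [:-a,1:])"
    using real
  proof (induction as)
    case (Cons a as)
    have "map_poly complex_of_real [:-Re a,1:] = [:-a,1:]"
      using Cons.prems[of a] by simp
    with Cons show ?case
      by (simp only: list.map prod_list.Cons of_real_poly.hom_mult o_def) simp
  qed simp
  also have "\<dots> = map_poly of_real (char_poly A)"
  proof -
    have "char_poly ?Ac = map_poly of_real (char_poly A)"
      using of_real_hom.char_poly_hom[OF A] by simp
    then show ?thesis
      using as by simp
  qed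
  finally have "char_poly A = (\<Prod>e\<leftarrow>map Re as. [:-e,1:])"
    by (simp add: poly_eq_iff coeff_map_poly)
  then show ?thesis
    by blast
qed

lemma similar_block_of_const_row_sums:
  fixes A :: "'a::field mat"
  assumes A: "A \<in> carrier_mat n n" and n: "0 < n"
    and rows: "\<And>i. i < n \<Longrightarrow> (\<Sum>j<n. A $$ (i,j)) = l"
  shows "\<exists>W W' A2 A3. similar_mat_wit A (four_block_mat (mat 1 1 (\<lambda>_. l)) A2 (0\<^sub>m (n-1) 1) A3) W W'
    \<and> A2 \<in> carrier_mat 1 (n-1) \<and> A3 \<in> carrier_mat (n-1) (n-1) \<and> (\<forall>i<n. W $$ (i,0) = 1)"
proof -
  \<comment> \<open>the first column of W is the all-ones eigenvector, the others are unit vectors\<close>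
  define W :: "'a mat" where "W = mat n n (\<lambda>(i,j). if j = 0 \<or> i = j then 1 else 0)"
  define W' :: "'a mat" where
    "W' = mat n n (\<lambda>(i,j). (if i = j then 1 else 0) - (if j = 0 \<and> i \<noteq> 0 then 1 else 0))"
  have W: "W \<in> carrier_mat n n" and W': "W' \<in> carrier_mat n n"
    unfolding W_def W'_def by auto
  have W'W: "W' * W = 1\<^sub>m n"
  proof (rule eq_matI)
    fix i j assume "i < dim_row (1\<^sub>m n :: 'a mat)" "j < dim_col (1\<^sub>m n :: 'a mat)"
    then have i: "i < n" and j: "j < n"
      by auto
    have "(W' * W) $$ (i,j) = W $$ (i,j) - (if i = 0 then 0 else W $$ (0,j))"
      using i j n W
      by (simp add: W'_def scalar_prod_def lessThan_atLeast0 left_diff_distrib sum_subtractf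
          if_one_zero_mult conj_commute[of "_ = 0"] cong: if_cong)
    then show "(W' * W) $$ (i,j) = 1\<^sub>m n $$ (i,j)"
      using i j n by (simp add: W_def)
  qed (use W W' in auto)
  have WW': "W * W' = 1\<^sub>m n"
    by (rule mat_mult_left_right_inverse[OF W' W W'W])
  define A' where "A' = W' * A * W"
  have A': "A' \<in> carrier_mat n n"
    unfolding A'_def using W' A W by auto
  have sim: "similar_mat_wit A A' W W'"
  proof (rule similar_mat_witI[OF WW' W'W _ A A' W W'])
    have "W * A' * W' = (W * W') * A * (W * W')"
      unfolding A'_def using W W' A by (simp add: assoc_mult_mat[of _ n n _ n _ n])
    then show "A = W * A' * W'"
      using A by (simp add: WW')
  qed
  have AW: "(A * W) $$ (k,0) = l * W $$ (k,0)" if "k < n" for k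
    using that n A rows[OF that] by (simp add: W_def scalar_prod_def lessThan_atLeast0)
  have col0: "A' $$ (i,0) = (if i = 0 then l else 0)" if i: "i < n" for i
  proof -
    have "A' $$ (i,0) = (\<Sum>k<n. W' $$ (i,k) * (A * W) $$ (k,0))"
      unfolding A'_def using i n A W W'
      by (simp add: assoc_mult_mat[of _ n n _ n _ n] scalar_prod_def lessThan_atLeast0)
    also have "\<dots> = l * (W' * W) $$ (i,0)"
      using i n W W' by (simp add: AW scalar_prod_def lessThan_atLeast0 sum_distrib_left mult.left_commute)
    finally show ?thesis
      using i n by (simp add: W'W)
  qed
  obtain A1 A2 A0 A3 where sb: "split_block A' 1 1 = (A1,A2,A0,A3)"
    by (cases "split_block A' 1 1") auto
  have dims: "dim_row A' = 1 + (n-1)" "dim_col A' = 1 + (n-1)"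
    using A' n by auto
  note blocks = split_block[OF sb dims]
  have "A1 = mat 1 1 (\<lambda>_. l)" and "A0 = 0\<^sub>m (n-1) 1"
    using sb col0 n A' unfolding split_block_def Let_def by (auto intro!: eq_matI)
  then have A'_blocks: "A' = four_block_mat (mat 1 1 (\<lambda>_. l)) A2 (0\<^sub>m (n-1) 1) A3"
    using blocks(5) by simp
  have "\<forall>i<n. W $$ (i,0) = 1"
    unfolding W_def by simp
  with sim[unfolded A'_blocks] blocks(2,4) show ?thesis
    by blast
qed

lemma prod_linear_factors_remove1:
  fixes l :: "'a::idom"
  assumes "[:-l,1:] * p = (\<Prod>e\<leftarrow>es. [:-e,1:])"
  shows "p = (\<Prod>e\<leftarrow>remove1 l es. [:-e,1:])"
proof -
  have "poly (\<Prod>e\<leftarrow>es. [:-e,1:]) l = 0"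
    unfolding assms[symmetric] by simp
  then have "l \<in> set es"
    by (auto simp: poly_prod_list prod_list_zero_iff)
  then have "(\<Prod>e\<leftarrow>es. [:-e,1:]) = [:-l,1:] * (\<Prod>e\<leftarrow>remove1 l es. [:-e,1:])"
    by (induction es) (auto simp: mult.left_commute simp del: mult_pCons_left)
  with assms show ?thesis
    by (simp del: mult_pCons_left)
qed

lemma mult_block_diag_one_first_column:
  fixes W P :: "'a::semiring_1 mat"
  assumes W: "W \<in> carrier_mat n n" and P: "P \<in> carrier_mat (n-1) (n-1)" and i: "i < n"
  shows "(W * four_block_mat (1\<^sub>m 1) (0\<^sub>m 1 (n-1)) (0\<^sub>m (n-1) 1) P) $$ (i,0) = W $$ (i,0)"
proof -
  define D where "D = four_block_mat (1\<^sub>m 1) (0\<^sub>m 1 (n-1)) (0\<^sub>m (n-1) 1) P"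
  have n: "0 < n"
    using i by simp
  have "D \<in> carrier_mat (1 + (n-1)) (1 + (n-1))"
    unfolding D_def using P by (intro four_block_carrier_mat) auto
  then have D: "D \<in> carrier_mat n n"
    using n by simp
  have D0: "D $$ (k,0) = (if k = 0 then 1 else 0)" if "k < n" for k
  proof -
    have "k < 1 + (n-1)"
      using that by simp
    then show ?thesis
      unfolding D_def using P by (subst index_mat_four_block) auto
  qed
  have "(W * D) $$ (i,0) = (\<Sum>k<n. W $$ (i,k) * D $$ (k,0))"
    using i D W n by (simp add: scalar_prod_def lessThan_atLeast0)
  also have "\<dots> = W $$ (i,0)"
    using n by (simp add: D0 mult_if_one_zero)
  finally show ?thesis
    unfolding D_def .
qed

lemma schur_decomposition_const_row_sums:
  fixes A :: "'a::conjugatable_ordered_field mat"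
  assumes A: "A \<in> carrier_mat n n" and n: "0 < n"
    and rows: "\<And>i. i < n \<Longrightarrow> (\<Sum>j<n. A $$ (i,j)) = l"
    and splits: "char_poly A = (\<Prod>e\<leftarrow>es. [:-e,1:])"
  shows "\<exists>P Q T. similar_mat_wit A T P Q \<and> upper_triangular T \<and> T $$ (0,0) = l
    \<and> (\<forall>i<n. P $$ (i,0) = 1)"
proof -
  let ?L = "mat 1 1 (\<lambda>_. l) :: 'a mat"
  obtain W W' A2 A3 where simW: "similar_mat_wit A (four_block_mat ?L A2 (0\<^sub>m (n-1) 1) A3) W W'"
    and A2: "A2 \<in> carrier_mat 1 (n-1)" and A3: "A3 \<in> carrier_mat (n-1) (n-1)"
    and W0: "\<forall>i<n. W $$ (i,0) = 1"
    using similar_block_of_const_row_sums[OF A n rows] by auto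
  have L: "?L \<in> carrier_mat 1 1"
    by simp
  have "char_poly A = char_poly (four_block_mat ?L A2 (0\<^sub>m (n-1) 1) A3)"
    using simW char_poly_similar unfolding similar_mat_def by blast
  also have "\<dots> = char_poly ?L * char_poly A3"
    by (rule char_poly_four_block_zeros_col[OF L A2 A3])
  also have "char_poly ?L = [:-l,1:]"
    by (simp add: char_poly_defs det_def sign_def)
  finally have cpA3: "char_poly A3 = (\<Prod>e\<leftarrow>remove1 l es. [:-e,1:])"
    using splits by (intro prod_linear_factors_remove1) simp
  obtain B P3 Q3 where sd: "schur_decomposition A3 (remove1 l es) = (B,P3,Q3)"
    by (metis prod_cases3)
  from schur_decomposition[OF A3 cpA3 sd]
  have sim3: "similar_mat_wit A3 B P3 Q3" and B: "upper_triangular B"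
    by auto
  from similar_mat_witD2[OF A3 sim3]
  have Bc: "B \<in> carrier_mat (n-1) (n-1)" and P3: "P3 \<in> carrier_mat (n-1) (n-1)"
    and Q3: "Q3 \<in> carrier_mat (n-1) (n-1)" and "P3 * Q3 = 1\<^sub>m (n-1)"
    by auto
  then have "A2 = 1\<^sub>m 1 * (A2 * P3) * Q3"
    using A2 by (simp add: assoc_mult_mat[of _ 1 "n-1" _ "n-1" _ "n-1"])
  moreover have "0\<^sub>m (n-1) 1 = P3 * 0\<^sub>m (n-1) 1 * 1\<^sub>m 1"
    using P3 by simp
  ultimately have simB: "similar_mat_wit (four_block_mat ?L A2 (0\<^sub>m (n-1) 1) A3)
      (four_block_mat ?L (A2 * P3) (0\<^sub>m (n-1) 1) B)
      (four_block_mat (1\<^sub>m 1) (0\<^sub>m 1 (n-1)) (0\<^sub>m (n-1) 1) P3)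
      (four_block_mat (1\<^sub>m 1) (0\<^sub>m 1 (n-1)) (0\<^sub>m (n-1) 1) Q3)"
    using A2 P3 by (intro similar_mat_wit_four_block[OF similar_mat_wit_refl[OF L] sim3 _ _ L A3]) auto
  have "\<forall>i<n. (W * four_block_mat (1\<^sub>m 1) (0\<^sub>m 1 (n-1)) (0\<^sub>m (n-1) 1) P3) $$ (i,0) = 1"
    using mult_block_diag_one_first_column[OF _ P3] similar_mat_witD2[OF A simW] W0 by auto
  moreover have "upper_triangular (four_block_mat ?L (A2 * P3) (0\<^sub>m (n-1) 1) B)"
    by (rule upper_triangular_four_block[OF L Bc _ B]) (auto simp: upper_triangular_def)
  moreover have "four_block_mat ?L (A2 * P3) (0\<^sub>m (n-1) 1) B $$ (0,0) = l"
    using n Bc by simp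
  ultimately show ?thesis
    using similar_mat_wit_trans[OF simW simB] by (intro exI conjI)
qed

lemma mult_conj_cancel:
  fixes A :: "'a::semiring_1 mat"
  assumes A: "A \<in> carrier_mat a b" and P: "P \<in> carrier_mat a a" and Q: "Q \<in> carrier_mat a a"
    and P': "P' \<in> carrier_mat b b" and Q': "Q' \<in> carrier_mat b b"
    and PQ: "P * Q = 1\<^sub>m a" and P'Q': "P' * Q' = 1\<^sub>m b"
  shows "P * (Q * A * P') * Q' = A"
proof -
  have "P * (Q * A * P') = P * (Q * A) * P'"
    by (rule assoc_mult_mat[symmetric]) (use A P Q P' in auto)
  also have "P * (Q * A) = A"
    using A P Q by (simp add: assoc_mult_mat[symmetric] PQ)
  finally have "P * (Q * A * P') * Q' = A * P' * Q'"
    by simp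
  also have "\<dots> = A * (P' * Q')"
    using A P' Q' by (rule assoc_mult_mat)
  finally show ?thesis
    using A by (simp add: P'Q')
qed

section \<open>Triangularising coupled pairs by a shear\<close>

definition shear_mat :: "nat \<Rightarrow> nat \<Rightarrow> (nat \<Rightarrow> 'a) \<Rightarrow> 'a::field mat" where
  "shear_mat N n s = mat N N (\<lambda>(i,j). (if i = j then 1 else 0) + (if n \<le> i \<and> i < 2 * n \<and> j = i - n then s j else 0))"

lemma shear_mat_carrier[simp]: "shear_mat N n s \<in> carrier_mat N N"
  unfolding shear_mat_def by simp

lemma shear_mat_dim[simp]: "dim_row (shear_mat N n s) = N" "dim_col (shear_mat N n s) = N"
  unfolding shear_mat_def by simp_all

lemma shear_mat_index:
  "a < N \<Longrightarrow> b < N \<Longrightarrow> shear_mat N n s $$ (a,b) =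
    (if a = b then 1 else 0) + (if n \<le> a \<and> a < 2 * n \<and> b = a - n then s b else 0)"
  unfolding shear_mat_def by simp

lemma mult_shear_mat_index:
  assumes X: "X \<in> carrier_mat N N" and N: "2 * n \<le> N" and a: "a < N" and b: "b < N"
  shows "(X * shear_mat N n s) $$ (a,b) = X $$ (a,b) + (if b < n then s b * X $$ (a, b + n) else 0)"
    and "(shear_mat N n s * X) $$ (a,b) = X $$ (a,b) + (if n \<le> a \<and> a < 2 * n then s (a - n) * X $$ (a - n, b) else 0)"
proof -
  have "(X * shear_mat N n s) $$ (a,b) = (\<Sum>k<N. X $$ (a,k) * shear_mat N n s $$ (k,b))"
    using X a b by (simp add: scalar_prod_def lessThan_atLeast0)
  also have "\<dots> = (\<Sum>k<N. (if k = b then X $$ (a,k) else 0))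
      + (\<Sum>k<N. (if k = b + n \<and> b < n then s b * X $$ (a,k) else 0))"
    using b by (subst sum.distrib[symmetric], intro sum.cong refl) (auto simp: shear_mat_index)
  finally show "(X * shear_mat N n s) $$ (a,b) = X $$ (a,b) + (if b < n then s b * X $$ (a, b + n) else 0)"
    using b N by (cases "b < n") (auto simp: sum.delta')
  have "(shear_mat N n s * X) $$ (a,b) = (\<Sum>k<N. shear_mat N n s $$ (a,k) * X $$ (k,b))"
    using X a b by (simp add: scalar_prod_def lessThan_atLeast0)
  also have "\<dots> = (\<Sum>k<N. (if k = a then X $$ (k,b) else 0))
      + (\<Sum>k<N. (if k = a - n \<and> n \<le> a \<and> a < 2 * n then s (a - n) * X $$ (k,b) else 0))"
    using a by (subst sum.distrib[symmetric], intro sum.cong refl) (auto simp: shear_mat_index)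
  finally show "(shear_mat N n s * X) $$ (a,b) = X $$ (a,b) + (if n \<le> a \<and> a < 2 * n then s (a - n) * X $$ (a - n, b) else 0)"
    using a N by (cases "n \<le> a \<and> a < 2 * n") (auto simp: sum.delta')
qed

lemma shear_mat_inverse:
  assumes N: "2 * n \<le> N"
  shows "shear_mat N n (\<lambda>j. - s j) * shear_mat N n s = 1\<^sub>m N"
    and "shear_mat N n s * shear_mat N n (\<lambda>j. - s j) = 1\<^sub>m N"
proof -
  show inv: "shear_mat N n (\<lambda>j. - s j) * shear_mat N n s = 1\<^sub>m N"
  proof (rule eq_matI)
    fix a b assume "a < dim_row (1\<^sub>m N :: 'a mat)" "b < dim_col (1\<^sub>m N :: 'a mat)"
    then have a: "a < N" and b: "b < N"
      by auto
    show "(shear_mat N n (\<lambda>j. - s j) * shear_mat N n s) $$ (a,b) = 1\<^sub>m N $$ (a,b)"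
    proof (cases "n \<le> a \<and> a < 2 * n")
      case True
      then have "a - n < n" and "a \<noteq> a - n"
        by arith+
      have "shear_mat N n s $$ (a,b) = (if a = b then 1 else 0) + (if b = a - n then s b else 0)"
        using True a b by (simp add: shear_mat_index)
      moreover have "shear_mat N n s $$ (a - n, b) = (if a - n = b then 1 else 0)"
        using \<open>a - n < n\<close> a b by (simp add: shear_mat_index)
      ultimately show ?thesis
        using True a b \<open>a \<noteq> a - n\<close> by (auto simp: mult_shear_mat_index(2)[OF shear_mat_carrier N a b])
    next
      case False
      then have "\<not> (n \<le> a \<and> a < 2 * n \<and> b = a - n)"
        by blast
      then have "shear_mat N n s $$ (a,b) = (if a = b then 1 else 0)"
        by (simp only: shear_mat_index[OF a b] if_not_P) simp
      then show ?thesis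
        unfolding mult_shear_mat_index(2)[OF shear_mat_carrier N a b] if_not_P[OF False]
        using a b by simp
    qed
  qed auto
  show "shear_mat N n s * shear_mat N n (\<lambda>j. - s j) = 1\<^sub>m N"
    by (rule mat_mult_left_right_inverse[OF shear_mat_carrier shear_mat_carrier inv])
qed

lemma similar_mat_shear_conj:
  assumes R: "R \<in> carrier_mat N N" and N: "2 * n \<le> N"
  shows "similar_mat R (shear_mat N n (\<lambda>t. - \<sigma> t) * R * shear_mat N n \<sigma>)"
proof -
  let ?L = "shear_mat N n \<sigma>" and ?L' = "shear_mat N n (\<lambda>t. - \<sigma> t)"
  have "R = ?L * (?L' * R * ?L) * ?L'"
    using mult_conj_cancel[OF R shear_mat_carrier shear_mat_carrier shear_mat_carrier shear_mat_carrier
        shear_mat_inverse(2)[OF N] shear_mat_inverse(2)[OF N]] by simp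
  then show ?thesis
    unfolding similar_mat_def using R shear_mat_inverse[OF N]
    by (blast intro: similar_mat_witI shear_mat_carrier mult_carrier_mat)
qed


text \<open>A root \<open>\<sigma>\<close> of \<open>q \<sigma>\<^sup>2 + (p - s) \<sigma> - r\<close>: adding \<open>\<sigma>\<close> times column \<open>t + n\<close> to column \<open>t\<close> and
  subtracting \<open>\<sigma>\<close> times row \<open>t\<close> from row \<open>t + n\<close> annihilates the entry \<open>r\<close> at \<open>(t + n, t)\<close> of a
  block \<open>[[p, q], [r, s]]\<close>.\<close>

lemma shear_root_exists:
  fixes p q r s :: real
  assumes disc: "0 \<le> (p - s)\<^sup>2 + 4 * q * r" and nondeg: "q = 0 \<Longrightarrow> r = 0"
  obtains \<sigma> where "r + \<sigma> * s = \<sigma> * (p + \<sigma> * q)"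
proof (cases "q = 0")
  case True
  then show ?thesis
    using nondeg that[of 0] by simp
next
  case False
  define D where "D = (p - s)\<^sup>2 + 4 * q * r"
  define \<sigma> where "\<sigma> = (s - p + sqrt D) / (2 * q)"
  have "sqrt D * sqrt D = D"
    using disc unfolding D_def by simp
  then have "q * (r + \<sigma> * s - \<sigma> * (p + \<sigma> * q)) = 0"
    using False unfolding \<sigma>_def D_def by (simp add: field_simps power2_eq_square)
  then show ?thesis
    using False that[of \<sigma>] by simp
qed

lemma shear_conj_index:
  assumes R: "R \<in> carrier_mat N N" and N: "2 * n \<le> N" and a: "a < N" and b: "b < N"
  shows "(shear_mat N n (\<lambda>t. - \<sigma> t) * R * shear_mat N n \<sigma>) $$ (a,b)
    = R $$ (a,b) + (if b < n then \<sigma> b * R $$ (a, b + n) else 0)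
      - (if n \<le> a \<and> a < 2 * n
         then \<sigma> (a - n) * (R $$ (a - n, b) + (if b < n then \<sigma> b * R $$ (a - n, b + n) else 0)) else 0)"
proof -
  have "(R * shear_mat N n \<sigma>) $$ (c,b) = R $$ (c,b) + (if b < n then \<sigma> b * R $$ (c, b + n) else 0)"
    if "c < N" for c
    by (rule mult_shear_mat_index(1)[OF R N that b])
  moreover have "a - n < N"
    using a by arith
  ultimately show ?thesis
    using R a by (simp add: assoc_mult_mat[of _ N N _ N _ N] mult_shear_mat_index(2)[OF _ N a b])
qed

lemma sheared_below_zero:
  fixes R :: "'a::field mat"
  assumes R: "R \<in> carrier_mat N N" and N: "2 * n \<le> N"
    and f: "inj_on f {..<N}" and adj: "\<And>t. t < n \<Longrightarrow> f (t + n) = Suc (f t)"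
    and below: "\<And>a b. a < N \<Longrightarrow> b < N \<Longrightarrow> f b < f a \<Longrightarrow> (b < n \<Longrightarrow> a \<noteq> b + n) \<Longrightarrow> R $$ (a,b) = 0"
    and \<sigma>: "\<And>t. t < n \<Longrightarrow> R $$ (t + n, t) + \<sigma> t * R $$ (t + n, t + n) = \<sigma> t * (R $$ (t,t) + \<sigma> t * R $$ (t, t + n))"
    and a: "a < N" and b: "b < N" and fba: "f b < f a"
  shows "(shear_mat N n (\<lambda>t. - \<sigma> t) * R * shear_mat N n \<sigma>) $$ (a,b) = 0"
proof -
  define Y where "Y = (\<lambda>a b. R $$ (a,b) + (if b < n then \<sigma> b * R $$ (a, b + n) else 0))"
  have "(shear_mat N n (\<lambda>t. - \<sigma> t) * R * shear_mat N n \<sigma>) $$ (a,b)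
      = Y a b - (if n \<le> a \<and> a < 2 * n then \<sigma> (a - n) * Y (a - n) b else 0)"
    unfolding Y_def by (rule shear_conj_index[OF R N a b])
  also have "\<dots> = 0"
  proof (cases "b < n \<and> a = b + n")
    case True
    then show ?thesis
      using \<sigma>[of b] by (simp add: Y_def)
  next
    case False
    have "R $$ (a, b + n) = 0" if "b < n"
    proof -
      have "f (b + n) \<noteq> f a"
        using False that a N inj_onD[OF f, of "b + n" a] by auto
      then show ?thesis
        using that a N fba adj[OF that] by (intro below) auto
    qed
    then have "Y a b = 0"
      unfolding Y_def using False a b fba below by auto
    moreover have "Y (a - n) b = 0" if "n \<le> a" "a < 2 * n"
    proof -
      have an: "a - n < n" "a - n < N" and a_eq: "a = (a - n) + n"
        using that a by arith+
      have "f b \<noteq> f (a - n)"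
        using False b an inj_onD[OF f, of b "a - n"] a_eq by auto
      then have fb: "f b < f (a - n)"
        using fba adj[OF an(1)] a_eq by (metis less_Suc_eq)
      have "R $$ (a - n, b) = 0"
        using an b fb by (intro below) auto
      moreover have "R $$ (a - n, b + n) = 0" if "b < n"
      proof -
        have "b + n \<noteq> a - n"
          using that an by arith
        then have "f (b + n) \<noteq> f (a - n)"
          using that an N inj_onD[OF f, of "b + n" "a - n"] by auto
        then show ?thesis
          using that an N fb adj[OF that] by (intro below) auto
      qed
      ultimately show ?thesis
        unfolding Y_def by simp
    qed
    ultimately show ?thesis
      by simp
  qed
  finally show ?thesis .
qed


lemma linear_factor_pair: "[:-x,1:] * [:-y,1:] = [: x * y, -(x + y), 1 :]" for x y :: "'a::comm_ring_1"
  by (simp add: algebra_simps)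

lemma sheared_pair_product:
  fixes p q r s \<sigma> :: "'a::comm_ring_1"
  assumes "r + \<sigma> * s = \<sigma> * (p + \<sigma> * q)"
  shows "(p + \<sigma> * q) * (s - \<sigma> * q) = p * s - q * r"
proof -
  have "(p + \<sigma> * q) * (s - \<sigma> * q) = p * s - q * (\<sigma> * (p + \<sigma> * q) - \<sigma> * s)"
    by (simp add: algebra_simps)
  also have "\<sigma> * (p + \<sigma> * q) - \<sigma> * s = r"
    using assms by (simp add: algebra_simps)
  finally show ?thesis .
qed

lemma char_poly_paired_triangular:
  fixes R :: "real mat"
  assumes R: "R \<in> carrier_mat N N" and N: "2 * n \<le> N"
    and f: "bij_betw f {..<N} {..<N}" and adj: "\<And>t. t < n \<Longrightarrow> f (t + n) = Suc (f t)"
    and below: "\<And>a b. a < N \<Longrightarrow> b < N \<Longrightarrow> f b < f a \<Longrightarrow> (b < n \<Longrightarrow> a \<noteq> b + n) \<Longrightarrow> R $$ (a,b) = 0"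
    and disc: "\<And>t. t < n \<Longrightarrow> 0 \<le> (R $$ (t,t) - R $$ (t + n, t + n))\<^sup>2 + 4 * R $$ (t, t + n) * R $$ (t + n, t)"
    and nondeg: "\<And>t. t < n \<Longrightarrow> R $$ (t, t + n) = 0 \<Longrightarrow> R $$ (t + n, t) = 0"
  shows "char_poly R =
    (\<Prod>t<n. [: R $$ (t,t) * R $$ (t + n, t + n) - R $$ (t, t + n) * R $$ (t + n, t),
              - (R $$ (t,t) + R $$ (t + n, t + n)), 1 :])
    * (\<Prod>a\<in>{2 * n..<N}. [:- R $$ (a,a), 1:])"
proof -
  have "\<forall>t. \<exists>\<sigma>. t < n \<longrightarrow> R $$ (t + n, t) + \<sigma> * R $$ (t + n, t + n) = \<sigma> * (R $$ (t,t) + \<sigma> * R $$ (t, t + n))"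
    using shear_root_exists[OF disc nondeg] by metis
  then obtain \<sigma> where \<sigma>: "\<And>t. t < n \<Longrightarrow>
      R $$ (t + n, t) + \<sigma> t * R $$ (t + n, t + n) = \<sigma> t * (R $$ (t,t) + \<sigma> t * R $$ (t, t + n))"
    by metis
  define R' where "R' = shear_mat N n (\<lambda>t. - \<sigma> t) * R * shear_mat N n \<sigma>"
  have R': "R' \<in> carrier_mat N N"
    unfolding R'_def using R by auto
  have R'_index: "R' $$ (a,b) = R $$ (a,b) + (if b < n then \<sigma> b * R $$ (a, b + n) else 0)
      - (if n \<le> a \<and> a < 2 * n
         then \<sigma> (a - n) * (R $$ (a - n, b) + (if b < n then \<sigma> b * R $$ (a - n, b + n) else 0)) else 0)"
    if "a < N" "b < N" for a b
    unfolding R'_def by (rule shear_conj_index[OF R N that])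
  have "char_poly R = char_poly R'"
    unfolding R'_def by (rule char_poly_similar[OF similar_mat_shear_conj[OF R N]])
  also have "\<dots> = (\<Prod>a<N. [:- R' $$ (a,a), 1:])"
    using R' f unfolding R'_def
    by (intro char_poly_triangular_after_reordering
        sheared_below_zero[where f = f and \<sigma> = \<sigma>, OF R N bij_betw_imp_inj_on[OF f] adj below \<sigma>])
  also have "\<dots> = (\<Prod>a<n. [:- R' $$ (a,a), 1:]) * (\<Prod>t<n. [:- R' $$ (t + n, t + n), 1:])
      * (\<Prod>a\<in>{2 * n..<N}. [:- R' $$ (a,a), 1:])"
    using N by (simp add: lessThan_atLeast0 prod.atLeastLessThan_concat[symmetric, of 0 n N]
        prod.atLeastLessThan_concat[symmetric, of n "2 * n" N] prod.shift_bounds_nat_ivl[of _ 0 n n, simplified]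
        mult_2)
  also have "(\<Prod>a<n. [:- R' $$ (a,a), 1:]) * (\<Prod>t<n. [:- R' $$ (t + n, t + n), 1:])
      = (\<Prod>t<n. [: R $$ (t,t) * R $$ (t + n, t + n) - R $$ (t, t + n) * R $$ (t + n, t),
              - (R $$ (t,t) + R $$ (t + n, t + n)), 1 :])"
    unfolding prod.distrib[symmetric]
  proof (intro prod.cong refl)
    fix t assume "t \<in> {..<n}"
    then have t: "t < n" "t < N" "t + n < N"
      using N by auto
    have "R' $$ (t,t) = R $$ (t,t) + \<sigma> t * R $$ (t, t + n)"
      "R' $$ (t + n, t + n) = R $$ (t + n, t + n) - \<sigma> t * R $$ (t, t + n)"
      using t by (simp_all add: R'_index)
    moreover have "(R $$ (t,t) + \<sigma> t * R $$ (t, t + n)) * (R $$ (t + n, t + n) - \<sigma> t * R $$ (t, t + n))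
        = R $$ (t,t) * R $$ (t + n, t + n) - R $$ (t, t + n) * R $$ (t + n, t)"
      by (rule sheared_pair_product[OF \<sigma>[OF t(1)]])
    ultimately show "[:- R' $$ (t,t), 1:] * [:- R' $$ (t + n, t + n), 1:] =
        [: R $$ (t,t) * R $$ (t + n, t + n) - R $$ (t, t + n) * R $$ (t + n, t),
           - (R $$ (t,t) + R $$ (t + n, t + n)), 1 :]"
      by (simp only: linear_factor_pair) simp
  qed
  also have "(\<Prod>a\<in>{2 * n..<N}. [:- R' $$ (a,a), 1:]) = (\<Prod>a\<in>{2 * n..<N}. [:- R $$ (a,a), 1:])"
    by (intro prod.cong refl) (simp add: R'_index)
  finally show ?thesis .
qed

section \<open>The corona matrix\<close>

lemma kron_mult3:
  assumes "A \<in> carrier_mat a b" "A' \<in> carrier_mat b c" "A'' \<in> carrier_mat c d"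
    and "B \<in> carrier_mat p q" "B' \<in> carrier_mat q r" "B'' \<in> carrier_mat r s"
  shows "kron A B * kron A' B' * kron A'' B'' = kron (A * A' * A'') (B * B' * B'')"
proof -
  have "kron A B * kron A' B' = kron (A * A') (B * B')"
    using assms by (intro kron_mult)
  moreover have "kron (A * A') (B * B') * kron A'' B'' = kron (A * A' * A'') (B * B' * B'')"
    using assms by (intro kron_mult) auto
  ultimately show ?thesis
    by simp
qed

lemma all_ones_carrier[simp]: "all_ones a c \<in> carrier_mat a c"
  unfolding all_ones_def by simp

lemma all_ones_index[simp]:
  "i < a \<Longrightarrow> j < c \<Longrightarrow> all_ones a c $$ (i,j) = 1"
  "dim_row (all_ones a c) = a" "dim_col (all_ones a c) = c"
  unfolding all_ones_def by auto

definition first_row_mat :: "nat \<Rightarrow> nat \<Rightarrow> (nat \<Rightarrow> 'a::zero) \<Rightarrow> 'a mat" where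
  "first_row_mat r c w = mat r c (\<lambda>(i,j). if i = 0 then w j else 0)"

lemma first_row_mat_carrier[simp]: "first_row_mat r c w \<in> carrier_mat r c"
  unfolding first_row_mat_def by simp

lemma first_row_mat_index[simp]:
  "i < r \<Longrightarrow> j < c \<Longrightarrow> first_row_mat r c w $$ (i,j) = (if i = 0 then w j else 0)"
  "dim_row (first_row_mat r c w) = r" "dim_col (first_row_mat r c w) = c"
  unfolding first_row_mat_def by auto

lemma first_row_mat_mult:
  assumes "P \<in> carrier_mat n c"
  shows "first_row_mat r n w * P = first_row_mat r c (\<lambda>j. \<Sum>k<n. w k * P $$ (k,j))"
  using assms by (intro eq_matI) (auto simp: scalar_prod_def lessThan_atLeast0)

lemma all_ones_row_mult:
  assumes "P \<in> carrier_mat n c"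
  shows "all_ones 1 n * P = first_row_mat 1 c (\<lambda>j. \<Sum>k<n. P $$ (k,j))"
  using assms by (intro eq_matI) (auto simp: scalar_prod_def lessThan_atLeast0)

lemma inverse_mult_all_ones:
  assumes Q: "Q \<in> carrier_mat n n" and P: "P \<in> carrier_mat n n" and QP: "Q * P = 1\<^sub>m n"
    and ones: "\<forall>i<n. P $$ (i,0) = (1::real)" and n: "0 < n"
  shows "Q * all_ones n c = first_row_mat n c (\<lambda>_. 1)"
proof (rule eq_matI)
  fix i j assume "i < dim_row (first_row_mat n c (\<lambda>_. 1 :: real))" "j < dim_col (first_row_mat n c (\<lambda>_. 1 :: real))"
  then have i: "i < n" and j: "j < c"
    by auto
  have "(Q * all_ones n c) $$ (i,j) = (\<Sum>k<n. Q $$ (i,k) * P $$ (k,0))"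
    using i j Q ones by (simp add: scalar_prod_def lessThan_atLeast0)
  also have "\<dots> = (Q * P) $$ (i,0)"
    using i n Q P by (simp add: scalar_prod_def lessThan_atLeast0)
  finally show "(Q * all_ones n c) $$ (i,j) = first_row_mat n c (\<lambda>_. 1) $$ (i,j)"
    using QP i j n by simp
qed (use Q in auto)

lemma conj_all_ones_minus_diag:
  fixes P Q :: "real mat"
  assumes Q: "Q \<in> carrier_mat n n" and P: "P \<in> carrier_mat n n" and QP: "Q * P = 1\<^sub>m n"
    and ones: "\<forall>i<n. P $$ (i,0) = 1" and n: "0 < n"
  shows "Q * (all_ones n n - c \<cdot>\<^sub>m 1\<^sub>m n) * P
    = first_row_mat n n (\<lambda>j. \<Sum>k<n. P $$ (k,j)) - c \<cdot>\<^sub>m 1\<^sub>m n"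
proof -
  have "Q * (all_ones n n - c \<cdot>\<^sub>m 1\<^sub>m n) = Q * all_ones n n - c \<cdot>\<^sub>m Q"
    using Q mult_minus_distrib_mat[OF Q all_ones_carrier smult_carrier_mat[OF one_carrier_mat]]
      mult_smult_distrib[OF Q one_carrier_mat, of c] by simp
  then have "Q * (all_ones n n - c \<cdot>\<^sub>m 1\<^sub>m n) * P = Q * all_ones n n * P - (c \<cdot>\<^sub>m Q) * P"
    using Q P by (simp add: minus_mult_distrib_mat[of _ n n])
  also have "(c \<cdot>\<^sub>m Q) * P = c \<cdot>\<^sub>m (Q * P)"
    by (rule mult_smult_assoc_mat[OF Q P])
  also have "Q * all_ones n n * P = first_row_mat n n (\<lambda>j. \<Sum>k<n. P $$ (k,j))"
    using P by (simp add: inverse_mult_all_ones[OF Q P QP ones n] first_row_mat_mult)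
  finally show ?thesis
    by (simp add: QP)
qed


definition corona_mat :: "real mat \<Rightarrow> real mat \<Rightarrow> real \<Rightarrow> real mat" where
  "corona_mat S0 S1 b =
    (let n = dim_row S0; m = dim_row S1; C = all_ones n n - (2 * b) \<cdot>\<^sub>m 1\<^sub>m n
     in four_block_mat S0 (kron (all_ones 1 m) C) (kron (all_ones m 1) C)
          (kron (all_ones m m) (all_ones n n - 1\<^sub>m n) + kron S1 (1\<^sub>m n)))"

text \<open>The corona matrix conjugated by \<open>diag(P\<^sub>0, P\<^sub>1 \<otimes> P\<^sub>0)\<close>, where \<open>T\<^sub>i = P\<^sub>i\<^sup>-\<^sup>1 S\<^sub>i P\<^sub>i\<close>, the
  first columns of \<open>P\<^sub>i\<close> are all-ones, and \<open>u\<close>, \<open>v\<close> are the column sums of \<open>P\<^sub>0\<close>, \<open>P\<^sub>1\<close>.\<close>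

definition corona_normal_form :: "real mat \<Rightarrow> real mat \<Rightarrow> (nat \<Rightarrow> real) \<Rightarrow> (nat \<Rightarrow> real) \<Rightarrow> real \<Rightarrow> real mat" where
  "corona_normal_form T0 T1 u v b =
    (let n = dim_row T0; m = dim_row T1;
         X = first_row_mat n n u - (2 * b) \<cdot>\<^sub>m 1\<^sub>m n; Y = first_row_mat n n u - 1 \<cdot>\<^sub>m 1\<^sub>m n
     in four_block_mat T0 (kron (first_row_mat 1 m v) X) (kron (first_row_mat m 1 (\<lambda>_. 1)) X)
          (kron (first_row_mat m m v) Y + kron T1 (1\<^sub>m n)))"

lemma conj_corona_upper_block:
  assumes P1: "P1 \<in> carrier_mat m m" and Q0: "Q0 \<in> carrier_mat n n"
    and C: "C \<in> carrier_mat n n" and P0: "P0 \<in> carrier_mat n n"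
  shows "Q0 * kron (all_ones 1 m) C * kron P1 P0
    = kron (first_row_mat 1 m (\<lambda>j. \<Sum>k<m. P1 $$ (k,j))) (Q0 * C * P0)"
proof -
  have "Q0 * kron (all_ones 1 m) C * kron P1 P0 = kron (1\<^sub>m 1) Q0 * kron (all_ones 1 m) C * kron P1 P0"
    unfolding kron_one_left ..
  also have "\<dots> = kron (1\<^sub>m 1 * all_ones 1 m * P1) (Q0 * C * P0)"
    by (rule kron_mult3[OF one_carrier_mat all_ones_carrier P1 Q0 C P0])
  also have "1\<^sub>m 1 * all_ones 1 m * P1 = all_ones 1 m * P1"
    by simp
  finally show ?thesis
    unfolding all_ones_row_mult[OF P1] .
qed

lemma conj_corona_lower_block:
  assumes Q1: "Q1 \<in> carrier_mat m m" and P1: "P1 \<in> carrier_mat m m" and Q1P1: "Q1 * P1 = 1\<^sub>m m"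
    and ones1: "\<forall>i<m. P1 $$ (i,0) = 1" and m: "0 < m"
    and Q0: "Q0 \<in> carrier_mat n n" and C: "C \<in> carrier_mat n n" and P0: "P0 \<in> carrier_mat n n"
  shows "kron Q1 Q0 * kron (all_ones m 1) C * P0 = kron (first_row_mat m 1 (\<lambda>_. 1)) (Q0 * C * P0)"
proof -
  have "kron Q1 Q0 * kron (all_ones m 1) C * P0 = kron Q1 Q0 * kron (all_ones m 1) C * kron (1\<^sub>m 1) P0"
    unfolding kron_one_left ..
  also have "\<dots> = kron (Q1 * all_ones m 1 * 1\<^sub>m 1) (Q0 * C * P0)"
    by (rule kron_mult3[OF Q1 all_ones_carrier one_carrier_mat Q0 C P0])
  also have "Q1 * all_ones m 1 * 1\<^sub>m 1 = first_row_mat m 1 (\<lambda>_. 1)"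
    using Q1 by (simp add: inverse_mult_all_ones[OF Q1 P1 Q1P1 ones1 m])
  finally show ?thesis .
qed

lemma conj_corona_diagonal_block:
  assumes S1: "S1 \<in> carrier_mat m m" and sim1: "similar_mat_wit S1 T1 P1 Q1"
    and ones1: "\<forall>i<m. P1 $$ (i,0) = 1" and m: "0 < m"
    and Q0: "Q0 \<in> carrier_mat n n" and P0: "P0 \<in> carrier_mat n n" and Q0P0: "Q0 * P0 = 1\<^sub>m n"
    and K: "K \<in> carrier_mat n n"
  shows "kron Q1 Q0 * (kron (all_ones m m) K + kron S1 (1\<^sub>m n)) * kron P1 P0
    = kron (first_row_mat m m (\<lambda>j. \<Sum>k<m. P1 $$ (k,j))) (Q0 * K * P0) + kron T1 (1\<^sub>m n)"
proof -
  from similar_mat_witD2[OF S1 sim1] have Q1P1: "Q1 * P1 = 1\<^sub>m m" and S1_eq: "S1 = P1 * T1 * Q1"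
    and T1: "T1 \<in> carrier_mat m m" and P1: "P1 \<in> carrier_mat m m" and Q1: "Q1 \<in> carrier_mat m m"
    by auto
  have kQ: "kron Q1 Q0 \<in> carrier_mat (m * n) (m * n)" and kP: "kron P1 P0 \<in> carrier_mat (m * n) (m * n)"
    and k1: "kron (all_ones m m) K \<in> carrier_mat (m * n) (m * n)"
    and k2: "kron S1 (1\<^sub>m n) \<in> carrier_mat (m * n) (m * n)"
    using Q1 Q0 P1 P0 K S1 by auto
  have "kron Q1 Q0 * (kron (all_ones m m) K + kron S1 (1\<^sub>m n)) * kron P1 P0
      = (kron Q1 Q0 * kron (all_ones m m) K + kron Q1 Q0 * kron S1 (1\<^sub>m n)) * kron P1 P0"
    by (simp only: mult_add_distrib_mat[OF kQ k1 k2])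
  also have "\<dots> = kron Q1 Q0 * kron (all_ones m m) K * kron P1 P0 + kron Q1 Q0 * kron S1 (1\<^sub>m n) * kron P1 P0"
    using kQ k1 k2 kP by (intro add_mult_distrib_mat[of _ "m * n" "m * n"]) auto
  also have "kron Q1 Q0 * kron (all_ones m m) K * kron P1 P0 = kron (Q1 * all_ones m m * P1) (Q0 * K * P0)"
    by (rule kron_mult3[OF Q1 all_ones_carrier P1 Q0 K P0])
  also have "Q1 * all_ones m m * P1 = first_row_mat m m (\<lambda>j. \<Sum>k<m. P1 $$ (k,j))"
    using P1 by (simp add: inverse_mult_all_ones[OF Q1 P1 Q1P1 ones1 m] first_row_mat_mult)
  also have "kron Q1 Q0 * kron S1 (1\<^sub>m n) * kron P1 P0 = kron (Q1 * S1 * P1) (Q0 * 1\<^sub>m n * P0)"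
    by (rule kron_mult3[OF Q1 S1 P1 Q0 one_carrier_mat P0])
  also have "Q1 * S1 * P1 = T1"
    using mult_conj_cancel[OF T1 Q1 P1 Q1 P1 Q1P1 Q1P1] unfolding S1_eq
    using Q1 P1 T1 by (simp add: assoc_mult_mat[of _ m m _ m _ m])
  also have "Q0 * 1\<^sub>m n * P0 = 1\<^sub>m n"
    using Q0 by (simp add: Q0P0)
  finally show ?thesis .
qed

lemma corona_mat_similar_normal_form:
  fixes S0 S1 T0 T1 P0 Q0 P1 Q1 :: "real mat"
  assumes S0: "S0 \<in> carrier_mat n n" and S1: "S1 \<in> carrier_mat m m"
    and sim0: "similar_mat_wit S0 T0 P0 Q0" and sim1: "similar_mat_wit S1 T1 P1 Q1"
    and ones0: "\<forall>i<n. P0 $$ (i,0) = 1" and ones1: "\<forall>i<m. P1 $$ (i,0) = 1"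
    and n: "0 < n" and m: "0 < m"
  shows "similar_mat (corona_mat S0 S1 b)
    (corona_normal_form T0 T1 (\<lambda>j. \<Sum>k<n. P0 $$ (k,j)) (\<lambda>j. \<Sum>k<m. P1 $$ (k,j)) b)"
proof -
  from similar_mat_witD2[OF S0 sim0] have P0Q0: "P0 * Q0 = 1\<^sub>m n" and Q0P0: "Q0 * P0 = 1\<^sub>m n"
    and T0: "T0 \<in> carrier_mat n n" and P0: "P0 \<in> carrier_mat n n" and Q0: "Q0 \<in> carrier_mat n n"
    by auto
  from similar_mat_witD2[OF S1 sim1] have P1Q1: "P1 * Q1 = 1\<^sub>m m" and Q1P1: "Q1 * P1 = 1\<^sub>m m"
    and T1: "T1 \<in> carrier_mat m m" and P1: "P1 \<in> carrier_mat m m" and Q1: "Q1 \<in> carrier_mat m m"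
    by auto
  define C where "C = all_ones n n - (2 * b) \<cdot>\<^sub>m 1\<^sub>m n"
  define JI where "JI = all_ones n n - 1 \<cdot>\<^sub>m 1\<^sub>m n"
  have C: "C \<in> carrier_mat n n" and JI: "JI \<in> carrier_mat n n"
    unfolding C_def JI_def by auto
  define kP where "kP = kron P1 P0"
  define kQ where "kQ = kron Q1 Q0"
  have kP: "kP \<in> carrier_mat (m * n) (m * n)" and kQ: "kQ \<in> carrier_mat (m * n) (m * n)"
    unfolding kP_def kQ_def using P1 P0 Q1 Q0 by auto
  have kQkP: "kQ * kP = 1\<^sub>m (m * n)" and kPkQ: "kP * kQ = 1\<^sub>m (m * n)"
    unfolding kP_def kQ_def
    by (simp_all add: kron_mult[OF Q1 Q0 P1 P0] kron_mult[OF P1 P0 Q1 Q0] Q1P1 Q0P0 P1Q1 P0Q0 kron_one_one)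
  define BR where "BR = kron (all_ones m m) JI + kron S1 (1\<^sub>m n)"
  define UR where "UR = kron (all_ones 1 m) C"
  define LL where "LL = kron (all_ones m 1) C"
  have BR: "BR \<in> carrier_mat (m * n) (m * n)" and UR: "UR \<in> carrier_mat n (m * n)"
    and LL: "LL \<in> carrier_mat (m * n) n"
    unfolding BR_def UR_def LL_def using JI S1 C kron_carrier_mat[OF all_ones_carrier C] by auto
  have "similar_mat_wit (four_block_mat S0 UR LL BR)
      (four_block_mat T0 (Q0 * UR * kP) (kQ * LL * P0) (kQ * BR * kP))
      (four_block_mat P0 (0\<^sub>m n (m * n)) (0\<^sub>m (m * n) n) kP)
      (four_block_mat Q0 (0\<^sub>m n (m * n)) (0\<^sub>m (m * n) n) kQ)"
  proof (rule similar_mat_wit_four_block[OF sim0 _ _ _ S0 BR])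
    show "similar_mat_wit BR (kQ * BR * kP) kP kQ"
      using BR kP kQ kPkQ kQkP mult_conj_cancel[OF BR kP kQ kP kQ kPkQ kPkQ]
      by (intro similar_mat_witI) auto
    show "UR = P0 * (Q0 * UR * kP) * kQ"
      by (rule mult_conj_cancel[OF UR P0 Q0 kP kQ P0Q0 kPkQ, symmetric])
    show "LL = kP * (kQ * LL * P0) * Q0"
      by (rule mult_conj_cancel[OF LL kP kQ P0 Q0 kPkQ P0Q0, symmetric])
  qed (use UR LL kQ kP Q0 P0 in auto)
  moreover have "four_block_mat S0 UR LL BR = corona_mat S0 S1 b"
  proof -
    have "all_ones n n - 1\<^sub>m n = JI"
      unfolding JI_def by (intro eq_matI) auto
    then show ?thesis
      using S0 S1 unfolding corona_mat_def UR_def LL_def BR_def C_def by (simp add: Let_def)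
  qed
  moreover have "four_block_mat T0 (Q0 * UR * kP) (kQ * LL * P0) (kQ * BR * kP)
      = corona_normal_form T0 T1 (\<lambda>j. \<Sum>k<n. P0 $$ (k,j)) (\<lambda>j. \<Sum>k<m. P1 $$ (k,j)) b"
  proof -
    let ?u = "\<lambda>j. \<Sum>k<n. P0 $$ (k,j)" and ?v = "\<lambda>j. \<Sum>k<m. P1 $$ (k,j)"
    have X: "Q0 * C * P0 = first_row_mat n n ?u - (2 * b) \<cdot>\<^sub>m 1\<^sub>m n"
      unfolding C_def by (rule conj_all_ones_minus_diag[OF Q0 P0 Q0P0 ones0 n])
    have Y: "Q0 * JI * P0 = first_row_mat n n ?u - 1 \<cdot>\<^sub>m 1\<^sub>m n"
      unfolding JI_def by (rule conj_all_ones_minus_diag[OF Q0 P0 Q0P0 ones0 n])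
    have "Q0 * UR * kP = kron (first_row_mat 1 m ?v) (first_row_mat n n ?u - (2 * b) \<cdot>\<^sub>m 1\<^sub>m n)"
      unfolding UR_def kP_def X[symmetric] by (rule conj_corona_upper_block[OF P1 Q0 C P0])
    moreover have "kQ * LL * P0 = kron (first_row_mat m 1 (\<lambda>_. 1)) (first_row_mat n n ?u - (2 * b) \<cdot>\<^sub>m 1\<^sub>m n)"
      unfolding LL_def kQ_def X[symmetric] by (rule conj_corona_lower_block[OF Q1 P1 Q1P1 ones1 m Q0 C P0])
    moreover have "kQ * BR * kP = kron (first_row_mat m m ?v) (first_row_mat n n ?u - 1 \<cdot>\<^sub>m 1\<^sub>m n)
        + kron T1 (1\<^sub>m n)"
      unfolding BR_def kQ_def kP_def Y[symmetric] by (rule conj_corona_diagonal_block[OF S1 sim1 ones1 m Q0 P0 Q0P0 JI])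
    ultimately show ?thesis
      using T0 T1 unfolding corona_normal_form_def by (simp add: Let_def)
  qed
  ultimately show ?thesis
    unfolding similar_mat_def by metis
qed


lemma corona_normal_form_index:
  assumes T0: "T0 \<in> carrier_mat n n" and T1: "T1 \<in> carrier_mat m m"
    and i: "i < n + m * n" and j: "j < n + m * n"
  shows "corona_normal_form T0 T1 u v b $$ (i,j) =
    (let I = i div n; J = j div n; s = i mod n; t = j mod n;
         X = (if s = 0 then u t else 0) - (if s = t then 2 * b else 0);
         Y = (if s = 0 then u t else 0) - (if s = t then 1 else 0)
     in if I = 0 then (if J = 0 then T0 $$ (s,t) else v (J - 1) * X)
        else if J = 0 then (if I = 1 then X else 0)
        else (if I = 1 then v (J - 1) * Y else 0) + (if s = t then T1 $$ (I - 1, J - 1) else 0))"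
proof -
  have n: "0 < n"
    using i by (auto intro: gr0I)
  have shift: "(k - n) div n = k div n - 1" "(k - n) mod n = k mod n" if "n \<le> k" for k
    using that n by (simp_all add: le_div_geq le_mod_geq)
  have div_less: "(k - n) div n < m" if "n \<le> k" "k < n + m * n" for k
    using that n by (simp add: less_mult_imp_div_less less_diff_conv2 mult.commute)
  have div_pos: "0 < k div n" if "n \<le> k" for k
    using that n by (simp add: div_greater_zero_iff)
  show ?thesis
    using T0 T1 i j n shift div_less[of i] div_less[of j] div_pos[of i] div_pos[of j]
    unfolding corona_normal_form_def Let_def
    by (auto simp: index_mat_four_block less_mult_imp_div_less div_eq_0_iff)
qed


lemma lex_less_iff:
  fixes x x' y y' m :: nat
  assumes "y \<le> m" and "y' \<le> m"
  shows "x * (m + 1) + y < x' * (m + 1) + y' \<longleftrightarrow> x < x' \<or> (x = x' \<and> y < y')"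
proof (cases x x' rule: linorder_cases)
  case less
  then have "Suc x * (m + 1) \<le> x' * (m + 1)"
    by (intro mult_le_mono1) simp
  then show ?thesis
    using less assms by simp
next
  case greater
  then have "Suc x' * (m + 1) \<le> x * (m + 1)"
    by (intro mult_le_mono1) simp
  then show ?thesis
    using greater assms by simp
qed simp

lemma bij_betw_block_transpose:
  fixes n m :: nat
  assumes n: "0 < n"
  shows "bij_betw (\<lambda>a. a mod n * (m + 1) + a div n) {..<(m + 1) * n} {..<(m + 1) * n}"
proof -
  let ?f = "\<lambda>a. a mod n * (m + 1) + a div n"
  have div_le: "a div n \<le> m" if "a < (m + 1) * n" for a
    using less_mult_imp_div_less[OF that] by simp
  have "inj_on ?f {..<(m + 1) * n}"
  proof (rule inj_onI)
    fix a a' assume a: "a \<in> {..<(m + 1) * n}" and a': "a' \<in> {..<(m + 1) * n}" and eq: "?f a = ?f a'"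
    then have "a mod n = a' mod n \<and> a div n = a' div n"
      using lex_less_iff[OF div_le div_le, of a a' "a mod n" "a' mod n"]
        lex_less_iff[OF div_le div_le, of a' a "a' mod n" "a mod n"] by auto
    then show "a = a'"
      by (metis div_mult_mod_eq)
  qed
  moreover have "?f a < (m + 1) * n" if "a < (m + 1) * n" for a
  proof -
    have "a mod n * (m + 1) \<le> (n - 1) * (m + 1)"
      using n by (intro mult_le_mono1) (simp add: less_Suc_eq_le[symmetric])
    moreover have "(n - 1) * (m + 1) + m < (m + 1) * n"
      using n by (cases n) (auto simp: algebra_simps)
    ultimately show ?thesis
      using div_le[OF that] by linarith
  qed
  ultimately show ?thesis
    unfolding bij_betw_def using endo_inj_surj[of "{..<(m + 1) * n}" ?f] by auto
qed

lemma prod_div_blocks: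
  fixes g :: "nat \<Rightarrow> 'a::comm_semiring_1"
  assumes n: "0 < n" and kl: "k \<le> l"
  shows "(\<Prod>a\<in>{k * n..<l * n}. g (a div n)) = (\<Prod>i\<in>{k..<l}. g i) ^ n"
proof -
  have "(\<Prod>a\<in>{k * n..<l * n}. g (a div n)) = (\<Prod>c<(l - k) * n. g ((c + k * n) div n))"
    using prod.shift_bounds_nat_ivl[of "\<lambda>a. g (a div n)" 0 "k * n" "(l - k) * n"] kl
    by (simp add: atLeast0LessThan add_mult_distrib[symmetric])
  also have "\<dots> = (\<Prod>i<l - k. \<Prod>j<n. g (i + k))"
    unfolding prod.lessThan_mult_nat using n by (intro prod.cong refl) (simp add: div_add1_eq)
  also have "\<dots> = (\<Prod>i<l - k. g (i + k)) ^ n"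
    by (simp add: prod_power_distrib[symmetric])
  also have "(\<Prod>i<l - k. g (i + k)) = (\<Prod>i\<in>{k..<l}. g i)"
    using prod.shift_bounds_nat_ivl[of g 0 k "l - k"] kl by (simp add: atLeast0LessThan)
  finally show ?thesis .
qed


lemma corona_normal_form_below_zero:
  fixes T0 T1 :: "real mat"
  assumes T0: "T0 \<in> carrier_mat n n" and T1: "T1 \<in> carrier_mat m m"
    and ut0: "upper_triangular T0" and ut1: "upper_triangular T1"
    and a: "a < n + m * n" and c: "c < n + m * n"
    and lt: "c mod n < a mod n \<or> (c mod n = a mod n \<and> c div n < a div n)"
    and not_pair: "c < n \<Longrightarrow> a \<noteq> c + n"
  shows "corona_normal_form T0 T1 u v b $$ (a,c) = 0"
proof -
  note R_index = corona_normal_form_index[OF T0 T1 a c, unfolded Let_def]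
  have n: "0 < n"
    using a by (auto intro: gr0I)
  then have an: "a mod n < n"
    by simp
  from lt consider (pos) "c mod n < a mod n" | (level) "c mod n = a mod n" "c div n < a div n"
    by blast
  then show ?thesis
  proof cases
    case pos
    then have "T0 $$ (a mod n, c mod n) = 0"
      using ut0 T0 an unfolding upper_triangular_def by auto
    then show ?thesis
      using pos by (simp add: R_index)
  next
    case level
    have "a div n \<noteq> 1 \<or> c div n \<noteq> 0"
    proof (rule ccontr)
      assume "\<not> (a div n \<noteq> 1 \<or> c div n \<noteq> 0)"
      then have ad: "a div n = 1" and "c div n = 0"
        by auto
      then have "c < n"
        using n by (simp add: div_eq_0_iff)
      moreover have "a = c + n"
        using div_mult_mod_eq[of a n] ad level(1) \<open>c < n\<close> by simp
      ultimately show False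
        using not_pair by blast
    qed
    moreover have "T1 $$ (a div n - 1, c div n - 1) = 0" if "c div n \<noteq> 0"
    proof -
      have "a div n < m + 1"
        using less_mult_imp_div_less[of a "m + 1" n] a by (simp add: algebra_simps)
      then have "a div n - 1 < m"
        using level(2) by linarith
      then show ?thesis
        using that level ut1 T1 unfolding upper_triangular_def by auto
    qed
    ultimately show ?thesis
      using level by (auto simp: R_index)
  qed
qed

lemma char_poly_corona_normal_form:
  fixes T0 T1 :: "real mat"
  assumes T0: "T0 \<in> carrier_mat n n" and T1: "T1 \<in> carrier_mat m m"
    and ut0: "upper_triangular T0" and ut1: "upper_triangular T1"
    and n: "0 < n" and m: "0 < m" and u0: "u 0 = real n" and v0: "v 0 = real m"
  shows "char_poly (corona_normal_form T0 T1 u v b) =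
    (\<Prod>t<n. let x = (if t = 0 then real n else 0) - 2 * b;
               s = real m * ((if t = 0 then real n else 0) - 1) + T1 $$ (0,0)
           in [: T0 $$ (t,t) * s - real m * x\<^sup>2, - (T0 $$ (t,t) + s), 1 :])
    * (\<Prod>j\<in>{1..<m}. [:- T1 $$ (j,j), 1:]) ^ n"
proof -
  define R where "R = corona_normal_form T0 T1 u v b"
  define N where "N = n + m * n"
  define f where "f a = a mod n * (m + 1) + a div n" for a
  have N_eq: "N = (m + 1) * n"
    unfolding N_def by simp
  have R: "R \<in> carrier_mat N N"
    using T0 T1 unfolding R_def N_def corona_normal_form_def Let_def carrier_mat_def by simp
  note R_index = corona_normal_form_index[OF T0 T1, of _ _ u v b, folded R_def N_def, unfolded Let_def]
  have div_le: "a div n \<le> m" if "a < N" for a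
    using less_mult_imp_div_less[of a "m + 1" n] that unfolding N_eq by simp
  have f_less: "f c < f a \<longleftrightarrow> c mod n < a mod n \<or> (c mod n = a mod n \<and> c div n < a div n)"
    if "a < N" "c < N" for a c
    unfolding f_def using lex_less_iff[OF div_le[OF that(2)] div_le[OF that(1)]] by simp
  have below: "R $$ (a,c) = 0"
    if "a < N" "c < N" "f c < f a" "c < n \<Longrightarrow> a \<noteq> c + n" for a c
    using that f_less[OF that(1,2)] unfolding R_def N_def
    by (intro corona_normal_form_below_zero[OF T0 T1 ut0 ut1]) auto
  have N2: "2 * n \<le> N"
    using m unfolding N_def by (simp add: mult_2)
  have pair_index: "R $$ (t,t) = T0 $$ (t,t)" "R $$ (t, t + n) = real m * x"
    "R $$ (t + n, t) = x" "R $$ (t + n, t + n) = s"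
    if "t < n" "x = (if t = 0 then real n else 0) - 2 * b"
      "s = real m * ((if t = 0 then real n else 0) - 1) + T1 $$ (0,0)" for t x s
    using that T0 T1 n m u0 v0 N2 by (auto simp: R_index)
  have "char_poly R =
      (\<Prod>t<n. [: R $$ (t,t) * R $$ (t + n, t + n) - R $$ (t, t + n) * R $$ (t + n, t),
                - (R $$ (t,t) + R $$ (t + n, t + n)), 1 :])
      * (\<Prod>a\<in>{2 * n..<N}. [:- R $$ (a,a), 1:])"
  proof (rule char_poly_paired_triangular[OF R N2])
    show "bij_betw f {..<N} {..<N}"
      unfolding f_def N_eq by (rule bij_betw_block_transpose[OF n])
    show "f (t + n) = Suc (f t)" if "t < n" for t
      using that n unfolding f_def by simp
    show "0 \<le> (R $$ (t,t) - R $$ (t + n, t + n))\<^sup>2 + 4 * R $$ (t, t + n) * R $$ (t + n, t)" if "t < n" for t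
      using pair_index[OF that refl refl] by simp
    show "R $$ (t, t + n) = 0 \<Longrightarrow> R $$ (t + n, t) = 0" if "t < n" for t
      using pair_index[OF that refl refl] m by simp
  qed (rule below)
  also have "(\<Prod>a\<in>{2 * n..<N}. [:- R $$ (a,a), 1:]) = (\<Prod>a\<in>{2 * n..<(m + 1) * n}. [:- T1 $$ (a div n - 1, a div n - 1), 1:])"
  proof (rule prod.cong)
    show "{2 * n..<N} = {2 * n..<(m + 1) * n}"
      by (simp add: N_eq)
    fix a assume "a \<in> {2 * n..<(m + 1) * n}"
    then have "a < N" "2 \<le> a div n"
      using n by (auto simp: N_eq less_eq_div_iff_mult_less_eq)
    then show "[:- R $$ (a,a), 1:] = [:- T1 $$ (a div n - 1, a div n - 1), 1:]"
      by (simp add: R_index)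
  qed
  also have "\<dots> = (\<Prod>i\<in>{2..<m + 1}. [:- T1 $$ (i - 1, i - 1), 1:]) ^ n"
    using m prod_div_blocks[OF n, of 2 "m + 1" "\<lambda>i. [:- T1 $$ (i - 1, i - 1), 1:]"] by simp
  also have "(\<Prod>i\<in>{2..<m + 1}. [:- T1 $$ (i - 1, i - 1), 1:]) = (\<Prod>j\<in>{1..<m}. [:- T1 $$ (j,j), 1:])"
    by (rule prod.reindex_bij_witness[of _ "\<lambda>j. j + 1" "\<lambda>i. i - 1"]) auto
  also have "(\<Prod>t<n. [: R $$ (t,t) * R $$ (t + n, t + n) - R $$ (t, t + n) * R $$ (t + n, t),
                - (R $$ (t,t) + R $$ (t + n, t + n)), 1 :])
      = (\<Prod>t<n. let x = (if t = 0 then real n else 0) - 2 * b;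
               s = real m * ((if t = 0 then real n else 0) - 1) + T1 $$ (0,0)
           in [: T0 $$ (t,t) * s - real m * x\<^sup>2, - (T0 $$ (t,t) + s), 1 :])"
    by (intro prod.cong refl) (simp add: pair_index Let_def power2_eq_square)
  finally show ?thesis
    unfolding R_def .
qed

lemma quadratic_poly_factor:
  fixes p s e :: real
  assumes "0 \<le> e"
  shows "[: p * s - e, - (p + s), 1 :] =
    [:- ((p + s + sqrt ((p - s)\<^sup>2 + 4 * e)) / 2), 1:] * [:- ((p + s - sqrt ((p - s)\<^sup>2 + 4 * e)) / 2), 1:]"
proof -
  have "sqrt ((p - s)\<^sup>2 + 4 * e) * sqrt ((p - s)\<^sup>2 + 4 * e) = (p - s)\<^sup>2 + 4 * e"
    using assms by simp
  then show ?thesis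
    unfolding linear_factor_pair by (simp add: field_simps power2_eq_square)
qed

lemma monic_quadratic_eq_linear_factors:
  fixes a1 a2 B C \<mu> :: real
  assumes "[:- a1, 1:] * [:- a2, 1:] = [: C, B, 1 :]"
  shows "\<mu>\<^sup>2 + B * \<mu> + C = (\<mu> - a1) * (\<mu> - a2)"
  using arg_cong[OF assms, of "\<lambda>p. poly p \<mu>"] by (simp add: algebra_simps power2_eq_square)

lemma prod_mset_repeat_mset: "(\<Prod>x\<in>#repeat_mset n M. f x) = (\<Prod>x\<in>#M. f x) ^ n"
  by (induction n) auto

lemma lessThan_eq_insert_0: "0 < k \<Longrightarrow> {..<k} = insert 0 {1..<k}"
  for k :: nat
  by auto

lemma char_poly_corona_mat:
  fixes S0 S1 T0 T1 P0 Q0 P1 Q1 :: "real mat"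
  assumes S0: "S0 \<in> carrier_mat n n" and S1: "S1 \<in> carrier_mat m m"
    and sim0: "similar_mat_wit S0 T0 P0 Q0" and sim1: "similar_mat_wit S1 T1 P1 Q1"
    and ut0: "upper_triangular T0" and ut1: "upper_triangular T1"
    and T0_00: "T0 $$ (0,0) = l0" and T1_00: "T1 $$ (0,0) = l1"
    and ones0: "\<forall>i<n. P0 $$ (i,0) = 1" and ones1: "\<forall>i<m. P1 $$ (i,0) = 1"
    and n: "0 < n" and m: "0 < m"
  shows "char_poly (corona_mat S0 S1 b) =
    [: l0 * (real m * (real n - 1) + l1) - real m * (real n - 2 * b)\<^sup>2, - (l0 + (real m * (real n - 1) + l1)), 1 :]
    * (\<Prod>i\<in>{1..<n}. [: T0 $$ (i,i) * (l1 - real m) - 4 * real m * b\<^sup>2, - (T0 $$ (i,i) + (l1 - real m)), 1 :])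
    * (\<Prod>j\<in>{1..<m}. [:- T1 $$ (j,j), 1:]) ^ n"
proof -
  have T0: "T0 \<in> carrier_mat n n" and T1: "T1 \<in> carrier_mat m m"
    using similar_mat_witD2[OF S0 sim0] similar_mat_witD2[OF S1 sim1] by auto
  have "similar_mat (corona_mat S0 S1 b)
      (corona_normal_form T0 T1 (\<lambda>j. \<Sum>k<n. P0 $$ (k,j)) (\<lambda>j. \<Sum>k<m. P1 $$ (k,j)) b)"
    by (rule corona_mat_similar_normal_form[OF S0 S1 sim0 sim1 ones0 ones1 n m])
  then have "char_poly (corona_mat S0 S1 b)
      = char_poly (corona_normal_form T0 T1 (\<lambda>j. \<Sum>k<n. P0 $$ (k,j)) (\<lambda>j. \<Sum>k<m. P1 $$ (k,j)) b)"
    by (rule char_poly_similar)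
  also have "\<dots> =
      (\<Prod>t<n. let x = (if t = 0 then real n else 0) - 2 * b;
                 s = real m * ((if t = 0 then real n else 0) - 1) + T1 $$ (0,0)
             in [: T0 $$ (t,t) * s - real m * x\<^sup>2, - (T0 $$ (t,t) + s), 1 :])
      * (\<Prod>j\<in>{1..<m}. [:- T1 $$ (j,j), 1:]) ^ n"
    (is "_ = (\<Prod>t<n. ?g t) * _")
    by (rule char_poly_corona_normal_form[OF T0 T1 ut0 ut1 n m]) (simp_all add: ones0 ones1)
  also have "(\<Prod>t<n. ?g t) = ?g 0 * (\<Prod>t\<in>{1..<n}. ?g t)"
    unfolding lessThan_eq_insert_0[OF n] by (subst prod.insert) auto
  also have "?g 0 = [: l0 * (real m * (real n - 1) + l1) - real m * (real n - 2 * b)\<^sup>2,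
      - (l0 + (real m * (real n - 1) + l1)), 1 :]"
    by (simp add: T0_00 T1_00 Let_def)
  also have "(\<Prod>t\<in>{1..<n}. ?g t) = (\<Prod>i\<in>{1..<n}.
      [: T0 $$ (i,i) * (l1 - real m) - 4 * real m * b\<^sup>2, - (T0 $$ (i,i) + (l1 - real m)), 1 :])"
    by (intro prod.cong refl) (simp add: Let_def T1_00 power2_eq_square)
  finally show ?thesis .
qed

lemma spectrum_corona_mat:
  fixes S0 S1 :: "real mat" and b l0 l1 :: real
  assumes n: "0 < n" and m: "0 < m" and S0: "S0 \<in> carrier_mat n n" and S1: "S1 \<in> carrier_mat m m"
    and sym0: "transpose_mat S0 = S0" and sym1: "transpose_mat S1 = S1"
    and row0: "\<And>i. i < n \<Longrightarrow> (\<Sum>j<n. S0 $$ (i,j)) = l0"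
    and row1: "\<And>i. i < m \<Longrightarrow> (\<Sum>j<m. S1 $$ (i,j)) = l1"
  shows "l0 \<in># spectrum_mset S0 \<and> l1 \<in># spectrum_mset S1 \<and>
    (\<exists>\<alpha>1 \<alpha>2.
      (\<forall>\<mu>. \<mu>\<^sup>2 + - (l0 + (real m * (real n - 1) + l1)) * \<mu>
            + (l0 * (real m * (real n - 1) + l1) - real m * (real n - 2 * b)\<^sup>2) = (\<mu> - \<alpha>1) * (\<mu> - \<alpha>2))
      \<and> spectrum_mset (corona_mat S0 S1 b) =
          image_mset (\<lambda>\<mu>. (\<mu> + (l1 - real m) + sqrt ((\<mu> - (l1 - real m))\<^sup>2 + 16 * real m * b\<^sup>2)) / 2)
            (spectrum_mset S0 - {#l0#})
        + image_mset (\<lambda>\<mu>. (\<mu> + (l1 - real m) - sqrt ((\<mu> - (l1 - real m))\<^sup>2 + 16 * real m * b\<^sup>2)) / 2)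
            (spectrum_mset S0 - {#l0#})
        + repeat_mset n (spectrum_mset S1 - {#l1#}) + {#\<alpha>1, \<alpha>2#})"
proof -
  obtain es0 es1 where "char_poly S0 = (\<Prod>e\<leftarrow>es0. [:-e,1:])" "char_poly S1 = (\<Prod>e\<leftarrow>es1. [:-e,1:])"
    using char_poly_symmetric_real_mat_splits[OF S0 sym0] char_poly_symmetric_real_mat_splits[OF S1 sym1]
    by blast
  then obtain P0 Q0 T0 P1 Q1 T1 where sim0: "similar_mat_wit S0 T0 P0 Q0" and ut0: "upper_triangular T0"
    and T0_00: "T0 $$ (0,0) = l0" and ones0: "\<forall>i<n. P0 $$ (i,0) = 1"
    and sim1: "similar_mat_wit S1 T1 P1 Q1" and ut1: "upper_triangular T1"
    and T1_00: "T1 $$ (0,0) = l1" and ones1: "\<forall>i<m. P1 $$ (i,0) = 1"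
    using schur_decomposition_const_row_sums[OF S0 n row0] schur_decomposition_const_row_sums[OF S1 m row1]
    by metis
  define M0 where "M0 = image_mset (\<lambda>i. T0 $$ (i,i)) (mset_set {1..<n})"
  define M1 where "M1 = image_mset (\<lambda>j. T1 $$ (j,j)) (mset_set {1..<m})"
  have spec0: "spectrum_mset S0 = add_mset l0 M0" and spec1: "spectrum_mset S1 = add_mset l1 M1"
    unfolding spectrum_mset_similar_upper_triangular[OF S0 sim0 ut0] M0_def lessThan_eq_insert_0[OF n]
      spectrum_mset_similar_upper_triangular[OF S1 sim1 ut1] M1_def lessThan_eq_insert_0[OF m]
    by (simp_all add: T0_00 T1_00)
  define s0 where "s0 = real m * (real n - 1) + l1"
  define e0 where "e0 = real m * (real n - 2 * b)\<^sup>2"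
  define \<alpha>1 where "\<alpha>1 = (l0 + s0 + sqrt ((l0 - s0)\<^sup>2 + 4 * e0)) / 2"
  define \<alpha>2 where "\<alpha>2 = (l0 + s0 - sqrt ((l0 - s0)\<^sup>2 + 4 * e0)) / 2"
  have \<alpha>: "[:- \<alpha>1, 1:] * [:- \<alpha>2, 1:] = [: l0 * s0 - e0, - (l0 + s0), 1 :]"
    unfolding \<alpha>1_def \<alpha>2_def by (rule quadratic_poly_factor[symmetric]) (simp add: e0_def)
  define root where "root \<sigma> \<mu> = (\<mu> + (l1 - real m) + \<sigma> * sqrt ((\<mu> - (l1 - real m))\<^sup>2 + 16 * real m * b\<^sup>2)) / 2"
    for \<sigma> \<mu> :: real
  have quad: "[: \<mu> * (l1 - real m) - 4 * real m * b\<^sup>2, - (\<mu> + (l1 - real m)), 1 :]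
      = [:- root 1 \<mu>, 1:] * [:- root (- 1) \<mu>, 1:]" for \<mu>
    using quadratic_poly_factor[of "4 * real m * b\<^sup>2" \<mu> "l1 - real m"] unfolding root_def
    by (simp add: mult.assoc)
  have "char_poly (corona_mat S0 S1 b) =
      (\<Prod>\<mu>\<in># image_mset (root 1) M0 + image_mset (root (- 1)) M0 + repeat_mset n M1 + {#\<alpha>1, \<alpha>2#}. [:- \<mu>, 1:])"
    unfolding char_poly_corona_mat[OF S0 S1 sim0 sim1 ut0 ut1 T0_00 T1_00 ones0 ones1 n m]
      s0_def[symmetric] e0_def[symmetric] \<alpha>[symmetric] quad M0_def M1_def
    by (simp add: prod_mset_repeat_mset prod.distrib prod_unfold_prod_mset image_mset.compositionality
        o_def ac_simps del: mult_pCons_left mult_pCons_right)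
  then have "spectrum_mset (corona_mat S0 S1 b) =
      image_mset (root 1) M0 + image_mset (root (- 1)) M0 + repeat_mset n M1 + {#\<alpha>1, \<alpha>2#}"
    by (rule spectrum_mset_eqI)
  moreover have "\<forall>\<mu>. \<mu>\<^sup>2 + - (l0 + s0) * \<mu> + (l0 * s0 - e0) = (\<mu> - \<alpha>1) * (\<mu> - \<alpha>2)"
    using monic_quadratic_eq_linear_factors[OF \<alpha>] by blast
  ultimately show ?thesis
    unfolding s0_def e0_def spec0 spec1 root_def by auto
qed


section \<open>Seidel matrices of regular hypergraphs\<close>

lemma seidel_mat_carrier[simp]: "seidel_mat n E \<in> carrier_mat n n"
  unfolding seidel_mat_def all_ones_def adj_mat_def by auto

lemma seidel_mat_dim[simp]: "dim_row (seidel_mat n E) = n" "dim_col (seidel_mat n E) = n"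
  unfolding seidel_mat_def all_ones_def adj_mat_def by auto

lemma seidel_mat_index:
  "i < n \<Longrightarrow> j < n \<Longrightarrow> seidel_mat n E $$ (i,j) =
    (if i = j then 0 else 1 - 2 * real (card {e\<in>E. i \<in> e \<and> j \<in> e}))"
  unfolding seidel_mat_def all_ones_def adj_mat_def by simp

lemma seidel_mat_symmetric: "transpose_mat (seidel_mat n E) = seidel_mat n E"
  by (rule eq_matI) (auto simp: seidel_mat_index conj_commute)

lemma sum_card_incident:
  assumes "finite F" and "finite J"
  shows "(\<Sum>j\<in>J. card {e\<in>F. j \<in> e}) = (\<Sum>e\<in>F. card (e \<inter> J))"
proof -
  have "(\<Sum>j\<in>J. card {e\<in>F. j \<in> e}) = (\<Sum>j\<in>J. \<Sum>e\<in>F. if j \<in> e then 1 else (0::nat))"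
    using assms by (intro sum.cong refl) (simp add: sum.If_cases Int_def conj_commute)
  also have "\<dots> = (\<Sum>e\<in>F. \<Sum>j\<in>J. if j \<in> e then 1 else (0::nat))"
    by (rule sum.swap)
  also have "\<dots> = (\<Sum>e\<in>F. card (e \<inter> J))"
    using assms by (intro sum.cong refl) (simp add: sum.If_cases Int_def conj_commute)
  finally show ?thesis .
qed

text \<open>Each of the r hyperedges through i contributes its k - 1 other vertices to the off-diagonal
  row sum of the adjacency matrix.\<close>

lemma seidel_mat_row_sum:
  assumes reg: "regular_hg k r n E" and i: "i < n"
  shows "(\<Sum>j<n. seidel_mat n E $$ (i,j)) = real n - 1 - 2 * real r * (real k - 1)"
proof -
  have sub: "\<And>e. e \<in> E \<Longrightarrow> e \<subseteq> {0..<n}" and card_e: "\<And>e. e \<in> E \<Longrightarrow> card e = k"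
    and deg: "card {e\<in>E. i \<in> e} = r"
    using reg i unfolding regular_hg_def uniform_hg_def hypergraph_def by auto
  have "finite E"
    using sub by (meson finite_Pow_iff finite_atLeastLessThan finite_subset PowI subsetI)
  define F where "F = {e\<in>E. i \<in> e}"
  define J where "J = {..<n} - {i}"
  have row: "(\<Sum>j<n. seidel_mat n E $$ (i,j))
      = (\<Sum>j<n. if i = j then 0 else 1) - 2 * real (\<Sum>j\<in>J. card {e\<in>F. j \<in> e})"
    using i unfolding J_def F_def
    by (simp add: seidel_mat_index sum_subtractf sum_distrib_left sum.If_cases Int_def Diff_eq
        conj_commute conj_left_commute)
  have "(\<Sum>j<n. if i = j then 0 else 1 :: real) = real n - 1"
    using i by (simp add: sum.If_cases Diff_eq[symmetric] of_nat_diff)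
  moreover have "real (\<Sum>j\<in>J. card {e\<in>F. j \<in> e}) = real r * (real k - 1)"
  proof -
    have "card (e \<inter> J) = k - 1" and "1 \<le> k" if "e \<in> F" for e
    proof -
      have eE: "e \<in> E" and ie: "i \<in> e"
        using that unfolding F_def by auto
      have fin: "finite e"
        using sub[OF eE] by (rule finite_subset) simp
      then have "e \<inter> J = e - {i}"
        using sub[OF eE] unfolding J_def by auto
      then show "card (e \<inter> J) = k - 1"
        using card_e[OF eE] ie fin by simp
      show "1 \<le> k"
        using card_e[OF eE] ie fin by (metis One_nat_def card_gt_0_iff empty_iff less_eq_Suc_le)
    qed
    then have "real (\<Sum>e\<in>F. card (e \<inter> J)) = (\<Sum>e\<in>F. real k - 1)"
      unfolding of_nat_sum by (intro sum.cong refl) auto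
    moreover have "card F = r"
      unfolding F_def by (rule deg)
    ultimately show ?thesis
      using sum_card_incident[of F J] \<open>finite E\<close> unfolding F_def J_def by simp
  qed
  ultimately show ?thesis
    using row by simp
qed

lemma seidel_corona_eq_corona_mat:
  "seidel_corona k n m E0 E1 = corona_mat (seidel_mat n E0) (seidel_mat m E1) (corona_b k m)"
  unfolding seidel_corona_def corona_mat_def Let_def by simp


theorem theorem4p3:
  fixes k r0 r1 n m :: nat and E0 E1 :: "nat set set"
  assumes "n \<ge> 1" and "m \<ge> 1"
    and "regular_hg k r0 n E0" and "regular_hg k r1 m E1"
  shows
    "let b = corona_b k m;
         l0 = real n - 1 - 2 * real r0 * (real k - 1);
         l1 = real m - 1 - 2 * real r1 * (real k - 1);
         M0 = spectrum_mset (seidel_mat n E0) - {#l0#};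
         M1 = spectrum_mset (seidel_mat m E1) - {#l1#};
         c = 2 * real r1 * (real k - 1);
         B = 2 - real n * (real m + 1) + 2 * (real r0 + real r1) * (real k - 1);
         C = (real n - 1 - 2 * real r0 * (real k - 1)) * (real m * real n - 1 - 2 * real r1 * (real k - 1))
             - real m * (real n - 2 * b)^2
     in l0 \<in># spectrum_mset (seidel_mat n E0) \<and> l1 \<in># spectrum_mset (seidel_mat m E1) \<and>
        (\<exists>\<alpha>1 \<alpha>2. (\<forall>\<mu>::real. \<mu>^2 + B * \<mu> + C = (\<mu> - \<alpha>1) * (\<mu> - \<alpha>2)) \<and>
          spectrum_mset (seidel_corona k n m E0 E1) =
            image_mset (\<lambda>\<mu>. (\<mu> - 1 - c + sqrt ((\<mu> + 1 + c)^2 + 16 * real m * b^2)) / 2) M0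
          + image_mset (\<lambda>\<mu>. (\<mu> - 1 - c - sqrt ((\<mu> + 1 + c)^2 + 16 * real m * b^2)) / 2) M0
          + repeat_mset n M1
          + {#\<alpha>1, \<alpha>2#})"
proof -
  define b where "b = corona_b k m"
  define l0 where "l0 = real n - 1 - 2 * real r0 * (real k - 1)"
  define l1 where "l1 = real m - 1 - 2 * real r1 * (real k - 1)"
  define c where "c = 2 * real r1 * (real k - 1)"
  have n: "0 < n" and m: "0 < m"
    using assms(1,2) by auto
  note main = spectrum_corona_mat[OF n m seidel_mat_carrier seidel_mat_carrier seidel_mat_symmetric
      seidel_mat_symmetric seidel_mat_row_sum[OF assms(3)] seidel_mat_row_sum[OF assms(4)], of b,
      folded l0_def l1_def]
  have "2 - real n * (real m + 1) + 2 * (real r0 + real r1) * (real k - 1)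
      = - (l0 + (real m * (real n - 1) + l1))"
    and "real m * real n - 1 - c = real m * (real n - 1) + l1"
    unfolding l0_def l1_def c_def by (simp_all add: algebra_simps)
  moreover have l1_c: "l1 - real m = - 1 - c"
    unfolding l1_def c_def by simp
  have "(\<lambda>\<mu>. (\<mu> - 1 - c + \<sigma> * sqrt ((\<mu> + 1 + c)\<^sup>2 + 16 * real m * b\<^sup>2)) / 2)
      = (\<lambda>\<mu>. (\<mu> + (l1 - real m) + \<sigma> * sqrt ((\<mu> - (l1 - real m))\<^sup>2 + 16 * real m * b\<^sup>2)) / 2)" for \<sigma>
    unfolding l1_c by (simp add: algebra_simps)
  from this[of 1] this[of "- 1"] have
    "(\<lambda>\<mu>. (\<mu> - 1 - c + sqrt ((\<mu> + 1 + c)\<^sup>2 + 16 * real m * b\<^sup>2)) / 2)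
      = (\<lambda>\<mu>. (\<mu> + (l1 - real m) + sqrt ((\<mu> - (l1 - real m))\<^sup>2 + 16 * real m * b\<^sup>2)) / 2)"
    "(\<lambda>\<mu>. (\<mu> - 1 - c - sqrt ((\<mu> + 1 + c)\<^sup>2 + 16 * real m * b\<^sup>2)) / 2)
      = (\<lambda>\<mu>. (\<mu> + (l1 - real m) - sqrt ((\<mu> - (l1 - real m))\<^sup>2 + 16 * real m * b\<^sup>2)) / 2)"
    by simp_all
  \<comment> \<open>\<open>l\<^sub>1\<close> is folded before \<open>c\<close>, which occurs inside it\<close>
  ultimately show ?thesis
    using main unfolding Let_def seidel_corona_eq_corona_mat l1_def[symmetric]
    unfolding b_def[symmetric] l0_def[symmetric] c_def[symmetric] by simp
qed

end
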